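(* Let $x\in\mathbb{C}^N$, let $b\ge 3$ be a power of $2$ with $b\le n$, $B=b^d$, and let $F$ be an integer with $F\ge 2d$. Choose $\Sigma\in\mathcal{M}_{d\times d}$ and $a,q\in[n]^d$ uniformly at random and independently of $x$, let $\pi=\pi_{\Sigma,q}$ and $u=\sqrt N\,\mathcal{F}^{-1}\big((P_{\Sigma,a,q}\hat x)\cdot\hat G\big)$ (pointwise product), and for $i\in[n]^d$ let $\mu^2_{\Sigma,q}(i)=\sum_{j\in[n]^d\setminus\{i\}}|x_j G_{o_i(j)}|^2$. Then, assuming exact arithmetic, for every $i\in[n]^d$: (1) $\mathbb{E}_{\Sigma,q}[\mu^2_{\Sigma,q}(i)]\le C^d\|x\|_2^2/B$, where $C$ is a constant depending only on the ratio $F/d$ (when $F=\Theta(d)$, $C$ is an absolute constant); (2) for every fixed $\Sigma,q$, $\mathbb{E}_a\big[|\omega^{-a^T\Sigma i}u_{\pi(i)}-x_i|^2\big]\le 2\,\mu^2_{\Sigma,q}(i)$.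
   Context: $n$ a power of $2$, $d\ge1$, $N=n^d$, $[n]=\{-n/2,\dots,n/2-1\}$ identified with $\mathbb{Z}_n$, $\omega=e^{2\pi i/n}$. Orthonormal DFT: $\hat x_j=\mathcal{F}(x)_j=N^{-1/2}\sum_{i\in[n]^d}\omega^{-i^Tj}x_i$, inverse $\mathcal{F}^{-1}(\hat x)_j=N^{-1/2}\sum_i\omega^{i^Tj}\hat x_i$. $\mathcal{M}_{d\times d}$: $d\times d$ matrices over $\mathbb{Z}_n$ with odd determinant. $\pi_{\Sigma,q}(i)=\Sigma(i-q)\bmod n$; $o_i(j)=\pi(j)-\pi(i)$. $(P_{\Sigma,a,q}\hat x)_i=\hat x_{\Sigma^T(i-a)}\omega^{i^T\Sigma q}$. Filter: $H^F_0=1$, $H^F_j=\big(\frac{\sin(\pi(b-1)j/n)}{(b-1)\sin(\pi j/n)}\big)^F$ for $j\in[n]\setminus\{0\}$, $G_i=\prod_{s=1}^dH^F_{i_s}$ for $i\in[n]^d$, and $\hat G=\mathcal{F}(G)$. *)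

theory Defs
  imports Complex_Main "Jordan_Normal_Form.Determinant"
begin

text \<open>Indices in [n]^d are represented as functions nat => int, with coordinates
  0..d-1 in {-n/2 .. n/2-1} and all other coordinates equal to 0.\<close>

definition idx :: "nat \<Rightarrow> nat \<Rightarrow> (nat \<Rightarrow> int) set" where
  "idx n d = {i. (\<forall>s<d. - (int n div 2) \<le> i s \<and> i s < int n div 2) \<and> (\<forall>s. d \<le> s \<longrightarrow> i s = 0)}"

text \<open>Reduction of an integer modulo n into [n] = {-n/2,...,n/2-1}.\<close>
definition cred :: "nat \<Rightarrow> int \<Rightarrow> int" where
  "cred n k = (k + int n div 2) mod int n - int n div 2"

definition vred :: "nat \<Rightarrow> nat \<Rightarrow> (nat \<Rightarrow> int) \<Rightarrow> (nat \<Rightarrow> int)" where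
  "vred n d v = (\<lambda>s. if s < d then cred n (v s) else 0)"

definition dotp :: "nat \<Rightarrow> (nat \<Rightarrow> int) \<Rightarrow> (nat \<Rightarrow> int) \<Rightarrow> int" where
  "dotp d i j = (\<Sum>s<d. i s * j s)"

definition matvec :: "nat \<Rightarrow> (nat \<Rightarrow> nat \<Rightarrow> int) \<Rightarrow> (nat \<Rightarrow> int) \<Rightarrow> (nat \<Rightarrow> int)" where
  "matvec d M v = (\<lambda>s. if s < d then (\<Sum>t<d. M s t * v t) else 0)"

definition mtransp :: "(nat \<Rightarrow> nat \<Rightarrow> int) \<Rightarrow> (nat \<Rightarrow> nat \<Rightarrow> int)" where
  "mtransp M = (\<lambda>s t. M t s)"

definition omega_pow :: "nat \<Rightarrow> int \<Rightarrow> complex" where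
  "omega_pow n k = cis (2 * pi * of_int k / of_nat n)"

definition dft :: "nat \<Rightarrow> nat \<Rightarrow> ((nat \<Rightarrow> int) \<Rightarrow> complex) \<Rightarrow> ((nat \<Rightarrow> int) \<Rightarrow> complex)" where
  "dft n d x = (\<lambda>j. (1 / complex_of_real (sqrt (real (n ^ d)))) *
      (\<Sum>i\<in>idx n d. omega_pow n (- dotp d i j) * x i))"

definition idft :: "nat \<Rightarrow> nat \<Rightarrow> ((nat \<Rightarrow> int) \<Rightarrow> complex) \<Rightarrow> ((nat \<Rightarrow> int) \<Rightarrow> complex)" where
  "idft n d xh = (\<lambda>j. (1 / complex_of_real (sqrt (real (n ^ d)))) *
      (\<Sum>i\<in>idx n d. omega_pow n (dotp d i j) * xh i))"

text \<open>M_{d x d}: d x d matrices over Z_n (entries represented in {0..<n}) with odd determinant.\<close>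
definition mats :: "nat \<Rightarrow> nat \<Rightarrow> (nat \<Rightarrow> nat \<Rightarrow> int) set" where
  "mats n d = {M. (\<forall>s t. (s < d \<and> t < d \<longrightarrow> 0 \<le> M s t \<and> M s t < int n) \<and>
                        (\<not> (s < d \<and> t < d) \<longrightarrow> M s t = 0))
               \<and> odd (det (mat d d (\<lambda>(s, t). M s t)))}"

definition perm_idx :: "nat \<Rightarrow> nat \<Rightarrow> (nat \<Rightarrow> nat \<Rightarrow> int) \<Rightarrow> (nat \<Rightarrow> int) \<Rightarrow> (nat \<Rightarrow> int) \<Rightarrow> (nat \<Rightarrow> int)" where
  "perm_idx n d Sig q i = vred n d (matvec d Sig (\<lambda>s. i s - q s))"

definition offs :: "nat \<Rightarrow> nat \<Rightarrow> (nat \<Rightarrow> nat \<Rightarrow> int) \<Rightarrow> (nat \<Rightarrow> int) \<Rightarrow> (nat \<Rightarrow> int) \<Rightarrow> (nat \<Rightarrow> int) \<Rightarrow> (nat \<Rightarrow> int)" where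
  "offs n d Sig q i j = vred n d (\<lambda>s. perm_idx n d Sig q j s - perm_idx n d Sig q i s)"

definition Pop :: "nat \<Rightarrow> nat \<Rightarrow> (nat \<Rightarrow> nat \<Rightarrow> int) \<Rightarrow> (nat \<Rightarrow> int) \<Rightarrow> (nat \<Rightarrow> int)
     \<Rightarrow> ((nat \<Rightarrow> int) \<Rightarrow> complex) \<Rightarrow> ((nat \<Rightarrow> int) \<Rightarrow> complex)" where
  "Pop n d Sig a q xh = (\<lambda>i. xh (vred n d (matvec d (mtransp Sig) (\<lambda>s. i s - a s)))
                               * omega_pow n (dotp d i (matvec d Sig q)))"

definition Hfilt :: "nat \<Rightarrow> nat \<Rightarrow> nat \<Rightarrow> int \<Rightarrow> real" where
  "Hfilt n b F j = (if cred n j = 0 then 1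
      else (sin (pi * (real b - 1) * of_int j / real n) / ((real b - 1) * sin (pi * of_int j / real n))) ^ F)"

definition Gfilt :: "nat \<Rightarrow> nat \<Rightarrow> nat \<Rightarrow> nat \<Rightarrow> (nat \<Rightarrow> int) \<Rightarrow> real" where
  "Gfilt n b F d i = (\<Prod>s<d. Hfilt n b F (i s))"

definition Ghat :: "nat \<Rightarrow> nat \<Rightarrow> nat \<Rightarrow> nat \<Rightarrow> (nat \<Rightarrow> int) \<Rightarrow> complex" where
  "Ghat n b F d = dft n d (\<lambda>i. complex_of_real (Gfilt n b F d i))"

definition uvec :: "nat \<Rightarrow> nat \<Rightarrow> nat \<Rightarrow> nat \<Rightarrow> (nat \<Rightarrow> nat \<Rightarrow> int) \<Rightarrow> (nat \<Rightarrow> int) \<Rightarrow> (nat \<Rightarrow> int)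
     \<Rightarrow> ((nat \<Rightarrow> int) \<Rightarrow> complex) \<Rightarrow> ((nat \<Rightarrow> int) \<Rightarrow> complex)" where
  "uvec n b F d Sig a q x = (\<lambda>j. complex_of_real (sqrt (real (n ^ d))) *
      idft n d (\<lambda>k. Pop n d Sig a q (dft n d x) k * Ghat n b F d k) j)"

definition mu2 :: "nat \<Rightarrow> nat \<Rightarrow> nat \<Rightarrow> nat \<Rightarrow> (nat \<Rightarrow> nat \<Rightarrow> int) \<Rightarrow> (nat \<Rightarrow> int)
     \<Rightarrow> ((nat \<Rightarrow> int) \<Rightarrow> complex) \<Rightarrow> (nat \<Rightarrow> int) \<Rightarrow> real" where
  "mu2 n b F d Sig q x i = (\<Sum>j\<in>idx n d - {i}. (norm (x j * complex_of_real (Gfilt n b F d (offs n d Sig q i j))))\<^sup>2)"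

definition sqnorm :: "nat \<Rightarrow> nat \<Rightarrow> ((nat \<Rightarrow> int) \<Rightarrow> complex) \<Rightarrow> real" where
  "sqnorm n d x = (\<Sum>i\<in>idx n d. (norm (x i))\<^sup>2)"

end

theory Submission
  imports Defs
begin

(* Part (2) is an exact Parseval computation.  Expanding all DFTs and using orthogonality of the
   characters a \<mapsto> \<omega>^(a\<cdot>w) on [n]^d, the phase-corrected estimate equals
   x_i + \<Sum>_{j\<noteq>i} x_j G(\<Sigma>(j-i)) \<omega>^(a\<cdot>\<Sigma>(j-i)).  Since \<Sigma> has odd determinant it is invertible
   modulo n = 2^k, so the frequencies \<Sigma>(j-i) are pairwise distinct mod n, and averaging the squared
   error over a gives exactly \<mu>\<^sup>2(i) (in particular at most 2\<mu>\<^sup>2(i)).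

   Part (1) reduces, since G(o_i(j)) = G(\<Sigma>(j-i)), to bounding the average over \<Sigma> of G(\<Sigma>v)^2 for
   a fixed nonzero v with entries in (-n,n).  Write v = 2^t v' with some entry v s0 = 2^t u, u odd.
   Splitting \<Sigma> into its column s0 and the remaining columns, for each choice of the other columns
   either no column completes \<Sigma> to an odd determinant or exactly half of all columns do.  Summing
   over the column, each coordinate of \<Sigma>v runs over an arithmetic progression of step 2^t u, which
   hits every multiple of 2^t at most 2^t times, and at least one coordinate is nonzero mod n.  The
   resulting one-dimensional sums of H^2 are bounded with the decay |H_j| \<le> (2n/((b-1)|j|))^F,
   giving the constant C = 320 for all ratios F/d \<ge> 2. *)

definition box :: "nat \<Rightarrow> int set \<Rightarrow> (nat \<Rightarrow> int) set" where
  "box d A = {c. (\<forall>s<d. c s \<in> A) \<and> (\<forall>s. d \<le> s \<longrightarrow> c s = 0)}"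

lemma box_0: "box 0 A = {\<lambda>_. 0}"
  unfolding box_def by auto

lemma box_Suc: "box (Suc d) A = (\<lambda>(c,x). c(d:=x)) ` (box d A \<times> A)"
proof (intro equalityI subsetI)
  fix c assume c: "c \<in> box (Suc d) A"
  hence "(c(d:=0), c d) \<in> box d A \<times> A" unfolding box_def by auto
  moreover have "c = (\<lambda>(c,x). c(d:=x)) (c(d:=0), c d)" by auto
  ultimately show "c \<in> (\<lambda>(c,x). c(d:=x)) ` (box d A \<times> A)" by blast
next
  fix c assume "c \<in> (\<lambda>(c,x). c(d:=x)) ` (box d A \<times> A)"
  then show "c \<in> box (Suc d) A" unfolding box_def
    by (auto simp: less_Suc_eq)
qed

lemma box_inj: "inj_on (\<lambda>(c,x). c(d:=x)) (box d A \<times> A)"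
proof (rule inj_onI, clarsimp)
  fix c x c' x'
  assume c: "c \<in> box d A" and c': "c' \<in> box d A" and e: "c(d := x) = c'(d := x')"
  have "x = x'" using fun_cong[OF e, of d] by simp
  moreover have "c = c'"
  proof
    fix s show "c s = c' s"
      using fun_cong[OF e, of s] c c' unfolding box_def by (cases "s = d") auto
  qed
  ultimately show "c = c' \<and> x = x'" by simp
qed

lemma finite_box: "finite A \<Longrightarrow> finite (box d A)"
  by (rule finite_subset[OF _ finite_set_of_finite_funs[of "{..<d}" A 0]]) (auto simp: box_def)

lemma sum_prod_box:
  fixes f :: "nat \<Rightarrow> int \<Rightarrow> 'a::comm_semiring_1"
  assumes "finite A"
  shows "(\<Sum>c\<in>box d A. \<Prod>s<d. f s (c s)) = (\<Prod>s<d. \<Sum>x\<in>A. f s x)"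
proof (induction d)
  case 0 then show ?case by (simp add: box_0)
next
  case (Suc d)
  have "(\<Sum>c\<in>box (Suc d) A. \<Prod>s<Suc d. f s (c s))
      = (\<Sum>p\<in>box d A \<times> A. \<Prod>s<Suc d. f s ((\<lambda>(c,x). c(d:=x)) p s))"
    unfolding box_Suc by (subst sum.reindex[OF box_inj]) (simp add: comp_def)
  also have "\<dots> = (\<Sum>c\<in>box d A. \<Sum>x\<in>A. (\<Prod>s<d. f s (c s)) * f d x)"
    unfolding sum.cartesian_product'
  proof (rule sum.cong[OF refl], rule sum.cong[OF refl])
    fix c x
    have "(\<Prod>s<Suc d. f s ((c(d:=x)) s)) = (\<Prod>s<d. f s ((c(d:=x)) s)) * f d x"
      by simp
    also have "(\<Prod>s<d. f s ((c(d:=x)) s)) = (\<Prod>s<d. f s (c s))"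
      by (rule prod.cong) auto
    finally show "(\<Prod>s<Suc d. f s ((\<lambda>(c,x). c(d:=x)) (c, x) s)) = (\<Prod>s<d. f s (c s)) * f d x"
      by simp
  qed
  also have "\<dots> = (\<Sum>c\<in>box d A. \<Prod>s<d. f s (c s)) * (\<Sum>x\<in>A. f d x)"
    by (simp add: sum_product)
  also have "\<dots> = (\<Prod>s<Suc d. \<Sum>x\<in>A. f s x)" using Suc by simp
  finally show ?case .
qed

lemma card_box: assumes "finite A" shows "card (box d A) = card A ^ d"
proof -
  have "card (box d A) = (\<Sum>c\<in>box d A. \<Prod>s<d. (\<lambda>s x. 1::nat) s (c s))" by simp
  also have "\<dots> = (\<Prod>s<d. \<Sum>x\<in>A. (1::nat))" by (rule sum_prod_box[OF assms])
  finally show ?thesis by simp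
qed

lemma idx_box: "idx n d = box d {- (int n div 2)..<int n div 2}"
  unfolding idx_def box_def by auto

lemma finite_idx: "finite (idx n d)"
  unfolding idx_box by (rule finite_box) simp

lemma card_idx: "even n \<Longrightarrow> card (idx n d) = n ^ d"
  unfolding idx_box by (subst card_box) auto

lemma omega_pow_zero[simp]: "omega_pow n 0 = 1"
  unfolding omega_pow_def by simp

lemma omega_pow_add: "omega_pow n (a + b) = omega_pow n a * omega_pow n b"
  unfolding omega_pow_def by (simp add: cis_mult ring_distribs add_divide_distrib)

lemma omega_pow_uminus: "omega_pow n (- a) = cnj (omega_pow n a)"
  unfolding omega_pow_def by (simp add: cis_cnj)

lemma omega_pow_diff: "omega_pow n (a - b) = omega_pow n a * cnj (omega_pow n b)"
  using omega_pow_add[of n a "-b"] by (simp add: omega_pow_uminus)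

lemma omega_pow_dvd: assumes "n > 0" "int n dvd a" shows "omega_pow n a = 1"
proof -
  obtain l where a: "a = int n * l" using assms by (auto elim: dvdE)
  have "2 * pi * real_of_int a / real n = 2 * pi * real_of_int l"
    using assms(1) by (simp add: a)
  then show ?thesis unfolding omega_pow_def by (simp add: cis_multiple_2pi)
qed

lemma omega_pow_cong: assumes "n > 0" "int n dvd (a - b)" shows "omega_pow n a = omega_pow n b"
proof -
  have "a = b + (a - b)" by simp
  then have "omega_pow n a = omega_pow n b * omega_pow n (a - b)" by (metis omega_pow_add)
  then show ?thesis using omega_pow_dvd[OF assms] by simp
qed

lemma omega_pow_eq_1: assumes "n > 0" "omega_pow n a = 1" shows "int n dvd a"
proof -
  have "cos (2 * pi * real_of_int a / real n) = 1"
    using arg_cong[OF assms(2), of Re] unfolding omega_pow_def by simp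
  then obtain l :: int where l: "2 * pi * real_of_int a / real n = l * 2 * pi"
    by (auto simp: cos_one_2pi_int)
  then have "real_of_int a = real n * l" using assms(1) by (simp add: field_simps)
  then have "a = int n * l" by (metis of_int_eq_iff of_int_mult of_int_of_nat_eq)
  then show ?thesis by simp
qed

lemma omega_pow_nat_mult: "omega_pow n (int y * w) = omega_pow n w ^ y"
  unfolding omega_pow_def by (simp add: DeMoivre algebra_simps)

lemma omega_pow_sum: "omega_pow n (\<Sum>s\<in>S. f s) = (\<Prod>s\<in>S. omega_pow n (f s))"
proof (cases "finite S")
  case True then show ?thesis by (induction S rule: finite_induct) (auto simp: omega_pow_add)
qed simp

lemma sum_omega_pow_line:
  assumes "n > 0" "even n"
  shows "(\<Sum>x\<in>{- (int n div 2)..<int n div 2}. omega_pow n (x * w)) = (if int n dvd w then of_nat n else 0)"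
proof (cases "int n dvd w")
  case True
  then have "(\<Sum>x\<in>{- (int n div 2)..<int n div 2}. omega_pow n (x * w)) = (\<Sum>x\<in>{- (int n div 2)..<int n div 2}. 1)"
    by (intro sum.cong refl omega_pow_dvd assms(1)) auto
  then show ?thesis using True assms by simp
next
  case False
  define h where "h = int n div 2"
  define z where "z = omega_pow n w"
  have z1: "z \<noteq> 1" using omega_pow_eq_1[OF assms(1)] False unfolding z_def by blast
  have zn: "z ^ n = 1" unfolding z_def
    using omega_pow_nat_mult[of n n w] omega_pow_dvd[OF assms(1), of "int n * w"] by simp
  have img: "{-h..<h} = (\<lambda>y. int y - h) ` {..<n}"
  proof -
    have "{-h..<h} = (\<lambda>y. int y - h) ` {..<nat (2*h)}"
    proof (intro equalityI subsetI)
      fix x assume "x \<in> {-h..<h}"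
      then have "x = int (nat (x + h)) - h" "nat (x + h) < nat (2*h)" by auto
      then show "x \<in> (\<lambda>y. int y - h) ` {..<nat (2*h)}" by blast
    qed auto
    moreover have "nat (2*h) = n" using assms unfolding h_def by auto
    ultimately show ?thesis by simp
  qed
  have inj: "inj_on (\<lambda>y. int y - h) {..<n}" by (auto simp: inj_on_def)
  have "(\<Sum>x\<in>{-h..<h}. omega_pow n (x * w)) = (\<Sum>y<n. omega_pow n ((int y - h) * w))"
    unfolding img by (subst sum.reindex[OF inj]) simp
  also have "\<dots> = (\<Sum>y<n. omega_pow n (- (h * w)) * z ^ y)"
    by (intro sum.cong refl) (simp add: z_def omega_pow_nat_mult[symmetric] algebra_simps omega_pow_add[symmetric])
  also have "\<dots> = omega_pow n (- (h * w)) * (\<Sum>y<n. z ^ y)" by (simp add: sum_distrib_left)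
  also have "(\<Sum>y<n. z ^ y) = 0" using sum_gp_strict[of z n] z1 zn by simp
  finally show ?thesis using False unfolding h_def by simp
qed

lemma omega_dotp: "omega_pow n (dotp d a w) = (\<Prod>s<d. omega_pow n (a s * w s))"
  unfolding dotp_def by (rule omega_pow_sum)

lemma sum_omega_pow_dotp:
  assumes "n > 0" "even n"
  shows "(\<Sum>a\<in>idx n d. omega_pow n (dotp d a w)) = (if (\<forall>s<d. int n dvd w s) then of_nat n ^ d else 0)"
proof -
  have "(\<Sum>a\<in>idx n d. omega_pow n (dotp d a w))
      = (\<Sum>a\<in>box d {- (int n div 2)..<int n div 2}. \<Prod>s<d. (\<lambda>s x. omega_pow n (x * w s)) s (a s))"
    unfolding idx_box omega_dotp by simp
  also have "\<dots> = (\<Prod>s<d. \<Sum>x\<in>{- (int n div 2)..<int n div 2}. omega_pow n (x * w s))"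
    by (rule sum_prod_box) simp
  also have "\<dots> = (\<Prod>s<d. (if int n dvd w s then of_nat n else 0))"
    using sum_omega_pow_line[OF assms] by simp
  also have "\<dots> = (if (\<forall>s<d. int n dvd w s) then of_nat n ^ d else 0)"
    by (auto simp: prod.neutral_const)
  finally show ?thesis .
qed

lemma cred_dvd: "int n dvd (x - cred n x)"
proof -
  have "x - cred n x = (x + int n div 2) - (x + int n div 2) mod int n" unfolding cred_def by simp
  also have "\<dots> = int n * ((x + int n div 2) div int n)" by (simp add: minus_mod_eq_mult_div)
  finally show ?thesis by simp
qed

lemma cred_range: assumes "n > 0" "even n"
  shows "- (int n div 2) \<le> cred n x" "cred n x < int n div 2"
proof -
  have "0 \<le> (x + int n div 2) mod int n" "(x + int n div 2) mod int n < int n" using assms by auto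
  moreover have "int n = 2 * (int n div 2)" using assms by auto
  ultimately show "- (int n div 2) \<le> cred n x" "cred n x < int n div 2" unfolding cred_def by linarith+
qed

lemma cred_unique: assumes "n > 0" "even n" "- (int n div 2) \<le> m" "m < int n div 2" "int n dvd (x - m)"
  shows "cred n x = m"
proof -
  have nn: "int n = 2 * (int n div 2)" using assms by auto
  obtain l where l: "x - m = int n * l" using assms(5) by (auto elim: dvdE)
  have "(x + int n div 2) mod int n = (m + int n div 2 + int n * l) mod int n" using l by (simp add: algebra_simps)
  also have "\<dots> = (m + int n div 2) mod int n" by simp
  also have "\<dots> = m + int n div 2" using assms nn by (intro mod_pos_pos_trivial) linarith+
  finally show ?thesis unfolding cred_def by simp
qed

lemma cred_eq0_iff: assumes "n > 0" "even n" shows "cred n x = 0 \<longleftrightarrow> int n dvd x"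
proof
  assume "cred n x = 0" then show "int n dvd x" using cred_dvd[of n x] by simp
next
  assume "int n dvd x" then show "cred n x = 0" using assms by (intro cred_unique) auto
qed

lemma cred_cong: assumes "int n dvd (x - y)" shows "cred n x = cred n y"
proof -
  obtain l where l0: "x - y = int n * l" using assms by (auto elim: dvdE)
  then have l: "x = y + int n * l" by simp
  have "(x + int n div 2) mod int n = (y + int n div 2 + int n * l) mod int n" using l by (simp add: algebra_simps)
  also have "\<dots> = (y + int n div 2) mod int n" by simp
  finally show ?thesis unfolding cred_def by simp
qed

(* The one-dimensional filter H: it is n-periodic (b - 1 is odd), even, bounded by 1, and decays
   like (n/(b|j|))^F away from 0. *)

lemma sin_shift_odd: assumes "odd k" shows "sin (X + pi * real k) = - sin X"
  using assms by (simp add: sin_add)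

lemma Hfilt_shift: assumes "n > 0" "even b" "b \<ge> 2"
  shows "Hfilt n b F (j + int n) = Hfilt n b F j"
proof -
  have c: "cred n (j + int n) = cred n j" by (rule cred_cong) simp
  have bb: "real b - 1 = real (b - 1)" using assms by simp
  have o: "odd (b - 1)" using assms by simp
  have e1: "pi * (real b - 1) * real_of_int (j + int n) / real n = pi * (real b - 1) * real_of_int j / real n + pi * real (b - 1)"
    using assms(1) by (simp add: field_simps bb)
  have e2: "pi * real_of_int (j + int n) / real n = pi * real_of_int j / real n + pi * real 1"
    using assms(1) by (simp add: field_simps)
  have "sin (pi * (real b - 1) * real_of_int (j + int n) / real n) = - sin (pi * (real b - 1) * real_of_int j / real n)"
    unfolding e1 by (rule sin_shift_odd[OF o])
  moreover have "sin (pi * real_of_int (j + int n) / real n) = - sin (pi * real_of_int j / real n)"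
    unfolding e2 by (rule sin_shift_odd) simp
  ultimately show ?thesis unfolding Hfilt_def c by simp
qed

lemma Hfilt_shift_nat: assumes "n > 0" "even b" "b \<ge> 2"
  shows "Hfilt n b F (j + int n * int l) = Hfilt n b F j"
proof (induction l)
  case (Suc l)
  have e: "j + int n * int (Suc l) = (j + int n * int l) + int n" by (simp add: algebra_simps)
  show ?case unfolding e by (metis Hfilt_shift[OF assms] Suc)
qed simp

lemma Hfilt_cong: assumes "n > 0" "even b" "b \<ge> 2" "int n dvd (j - j')"
  shows "Hfilt n b F j = Hfilt n b F j'"
proof -
  obtain l where l: "j - j' = int n * l" using assms(4) by (auto elim: dvdE)
  show ?thesis
  proof (cases "l \<ge> 0")
    case True
    then have "j = j' + int n * int (nat l)" using l by simp
    then show ?thesis by (metis Hfilt_shift_nat[OF assms(1-3)])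
  next
    case False
    then have "j' = j + int n * int (nat (-l))" using l by (simp add: algebra_simps)
    then show ?thesis by (metis Hfilt_shift_nat[OF assms(1-3)])
  qed
qed

lemma Hfilt_neg: assumes "n > 0" "even n" shows "Hfilt n b F (- j) = Hfilt n b F j"
proof -
  have c: "cred n (- j) = 0 \<longleftrightarrow> cred n j = 0" using cred_eq0_iff[OF assms] by simp
  have "sin (pi * (real b - 1) * real_of_int (- j) / real n) = - sin (pi * (real b - 1) * real_of_int j / real n)"
    "sin (pi * real_of_int (- j) / real n) = - sin (pi * real_of_int j / real n)"
  proof -
    have "pi * (real b - 1) * real_of_int (- j) / real n = - (pi * (real b - 1) * real_of_int j / real n)"
      "pi * real_of_int (- j) / real n = - (pi * real_of_int j / real n)" by simp_all
    then show "sin (pi * (real b - 1) * real_of_int (- j) / real n) = - sin (pi * (real b - 1) * real_of_int j / real n)"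
      "sin (pi * real_of_int (- j) / real n) = - sin (pi * real_of_int j / real n)"
      by (simp_all only: sin_minus)
  qed
  then show ?thesis unfolding Hfilt_def using c by simp
qed

lemma Hfilt_zero[simp]: "Hfilt n b F 0 = 1"
proof -
  have "int n div 2 mod int n = int n div 2" by (cases "n = 0") (auto intro: mod_pos_pos_trivial)
  then show ?thesis unfolding Hfilt_def cred_def by simp
qed

lemma abs_sin_nat_mult: "\<bar>sin (real k * x)\<bar> \<le> real k * \<bar>sin x\<bar>"
proof (induction k)
  case (Suc k)
  have "sin (real (Suc k) * x) = sin (real k * x) * cos x + cos (real k * x) * sin x"
    by (simp add: distrib_right sin_add)
  also have "\<bar>\<dots>\<bar> \<le> \<bar>sin (real k * x)\<bar> * \<bar>cos x\<bar> + \<bar>cos (real k * x)\<bar> * \<bar>sin x\<bar>"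
    by (metis abs_mult abs_triangle_ineq)
  also have "\<dots> \<le> \<bar>sin (real k * x)\<bar> + \<bar>sin x\<bar>"
    by (intro add_mono mult_left_le mult_left_le_one_le) (auto simp: abs_cos_le_one)
  finally show ?case using Suc by (simp add: algebra_simps)
qed simp

lemma sin_ge_third: assumes "0 \<le> x" "x \<le> pi / 2" shows "x / 3 \<le> sin x"
proof -
  have "\<bar>sin x - (\<Sum>m<3. sin_coeff m * x ^ m)\<bar> \<le> inverse (fact 3) * \<bar>x\<bar> ^ 3"
    by (rule Maclaurin_sin_bound)
  moreover have "(\<Sum>m<3. sin_coeff m * x ^ m) = x"
    by (simp add: numeral_3_eq_3 sin_coeff_Suc cos_coeff_Suc)
  ultimately have m: "\<bar>sin x - x\<bar> \<le> x ^ 3 / 6" using assms by (simp add: fact_numeral divide_simps)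
  have "x - sin x \<le> \<bar>sin x - x\<bar>" using abs_ge_self[of "x - sin x"] abs_minus_commute[of x "sin x"] by linarith
  with m have "x - sin x \<le> x ^ 3 / 6" by (rule order_trans[rotated])
  then have "x - x ^ 3 / 6 \<le> sin x" by linarith
  moreover have "x < 2" using assms pi_less_4 by simp
  then have "x ^ 3 / 6 \<le> 2 * x / 3"
  proof -
    have "x * x \<le> 2 * 2" using \<open>x < 2\<close> assms(1) by (intro mult_mono) auto
    then have "x * x \<le> 4" by simp
    then have "x * (x * x) \<le> x * 4" using assms(1) by (simp add: mult_left_mono)
    then show ?thesis by (simp add: power3_eq_cube)
  qed
  ultimately show ?thesis by linarith
qed

lemma Hfilt_le1: assumes "b \<ge> 2" shows "\<bar>Hfilt n b F j\<bar> \<le> 1"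
proof -
  define A where "A = sin (pi * (real b - 1) * real_of_int j / real n)"
  define B where "B = sin (pi * real_of_int j / real n)"
  have bb: "real b - 1 = real (b - 1)" using assms by simp
  have e: "pi * real (b - 1) * real_of_int j / real n = real (b-1) * (pi * real_of_int j / real n)"
    by simp
  have "\<bar>A\<bar> \<le> (real b - 1) * \<bar>B\<bar>" unfolding A_def B_def bb e
    by (rule abs_sin_nat_mult)
  then have "\<bar>A / ((real b - 1) * B)\<bar> \<le> 1"
    using assms by (cases "B = 0") (auto simp: abs_mult divide_le_eq_1)
  then have "\<bar>A / ((real b - 1) * B)\<bar> ^ F \<le> 1" by (metis abs_ge_zero power_le_one)
  then have "\<bar>(A / ((real b - 1) * B)) ^ F\<bar> \<le> 1" by (simp only: power_abs)
  then show ?thesis unfolding Hfilt_def A_def[symmetric] B_def[symmetric]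
    by simp
qed

lemma abs_sin_lower:
  assumes n0: "n > 0" and jn: "2 * \<bar>j\<bar> \<le> int n"
  shows "2 * \<bar>real_of_int j\<bar> / (3 * real n) \<le> \<bar>sin (pi * real_of_int j / real n)\<bar>"
proof -
  define x where "x = pi * \<bar>real_of_int j\<bar> / real n"
  have x0: "0 \<le> x" unfolding x_def by simp
  have "2 * \<bar>real_of_int j\<bar> \<le> real n" using jn by linarith
  then have xp: "x \<le> pi / 2" unfolding x_def using n0 by (simp add: divide_simps)
  have sx: "0 \<le> sin x" using x0 xp by (intro sin_ge_zero) auto
  have "pi * real_of_int j / real n = x \<or> pi * real_of_int j / real n = - x"
    unfolding x_def by (cases "j \<ge> 0") auto
  then have "\<bar>sin (pi * real_of_int j / real n)\<bar> = sin x" using sx by auto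
  moreover have "2 * \<bar>real_of_int j\<bar> / (3 * real n) \<le> x / 3"
    using mult_right_mono[OF pi_ge_two, of "\<bar>real_of_int j\<bar>"] n0 unfolding x_def
    by (simp add: divide_simps)
  ultimately show ?thesis using sin_ge_third[OF x0 xp] by linarith
qed

lemma Hfilt_decay: assumes "b \<ge> 2" "n > 0" "even n" "j \<noteq> 0" "2 * \<bar>j\<bar> \<le> int n"
  shows "\<bar>Hfilt n b F j\<bar> \<le> (2 * real n / ((real b - 1) * \<bar>real_of_int j\<bar>)) ^ F"
proof -
  define A where "A = sin (pi * (real b - 1) * real_of_int j / real n)"
  define B where "B = sin (pi * real_of_int j / real n)"
  have "\<not> int n dvd j"
    using zdvd_imp_le[of "int n" "\<bar>j\<bar>"] assms(2,4,5) by auto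
  then have cr: "cred n j \<noteq> 0" using cred_eq0_iff[OF assms(2,3)] by simp
  define l where "l = 2 * \<bar>real_of_int j\<bar> / (3 * real n)"
  have lB: "l \<le> \<bar>B\<bar>" unfolding l_def B_def by (rule abs_sin_lower[OF assms(2,5)])
  have l0: "0 < l" using assms(2,4) unfolding l_def by simp
  have b1: "0 < real b - 1" using assms by simp
  have "\<bar>A / ((real b - 1) * B)\<bar> \<le> 1 / ((real b - 1) * \<bar>B\<bar>)"
    using b1 abs_sin_le_one[of "pi * (real b - 1) * real_of_int j / real n"]
    unfolding A_def by (simp add: abs_mult divide_right_mono)
  also have "\<dots> \<le> 1 / ((real b - 1) * l)"
    using lB l0 b1 by (intro divide_left_mono mult_left_mono mult_pos_pos) auto
  also have "\<dots> \<le> 2 * real n / ((real b - 1) * \<bar>real_of_int j\<bar>)"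
    using b1 assms(2,4) unfolding l_def by (simp add: divide_simps)
  finally have "\<bar>A / ((real b - 1) * B)\<bar> ^ F \<le> (2 * real n / ((real b - 1) * \<bar>real_of_int j\<bar>)) ^ F"
    by (intro power_mono) auto
  then show ?thesis unfolding Hfilt_def A_def[symmetric] B_def[symmetric] using cr
    by (simp add: power_abs)
qed

lemma Gfilt_cong: assumes "n > 0" "even b" "b \<ge> 2" "\<forall>s<d. int n dvd (w s - w' s)"
  shows "Gfilt n b F d w = Gfilt n b F d w'"
  unfolding Gfilt_def using Hfilt_cong[OF assms(1-3)] assms(4) by (intro prod.cong) auto

lemma Gfilt_neg: assumes "n > 0" "even n" shows "Gfilt n b F d (\<lambda>s. - w s) = Gfilt n b F d w"
  unfolding Gfilt_def using Hfilt_neg[OF assms] by simp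

lemma Gfilt_zero[simp]: "Gfilt n b F d (\<lambda>_. 0) = 1"
  unfolding Gfilt_def by simp

(* Matrices with odd determinant.  imat views a d \<times> d array as a Jordan_Normal_Form matrix, so
   that adjugates, cofactors and Laplace expansion are available. *)

definition imat :: "nat \<Rightarrow> (nat \<Rightarrow> nat \<Rightarrow> int) \<Rightarrow> int mat" where
  "imat d Sig = mat d d (\<lambda>(s,t). Sig s t)"

lemma imat_carrier[simp]: "imat d Sig \<in> carrier_mat d d"
  unfolding imat_def by simp

lemma mats_alt: "mats n d = {Sig. (\<forall>s t. (s < d \<and> t < d \<longrightarrow> 0 \<le> Sig s t \<and> Sig s t < int n) \<and>
                        (\<not> (s < d \<and> t < d) \<longrightarrow> Sig s t = 0)) \<and> odd (det (imat d Sig))}"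
  unfolding mats_def imat_def by simp

(* An odd-determinant matrix is invertible modulo n = 2^k: if n divides every entry of \<Sigma>w then n
   divides every entry of w (multiply by the adjugate and cancel det \<Sigma>, which is coprime to n). *)
lemma dvd_of_dvd_matvec:
  assumes od: "odd (det (imat d Sig))" and n: "n = 2 ^ k"
    and h: "\<forall>s<d. int n dvd matvec d Sig w s" and s: "s < d"
  shows "int n dvd w s"
proof -
  let ?M = "imat d Sig"
  have M: "?M \<in> carrier_mat d d" by simp
  let ?A = "adj_mat ?M"
  have A: "?A \<in> carrier_mat d d" and AM: "?A * ?M = det ?M \<cdot>\<^sub>m 1\<^sub>m d" using adj_mat[OF M] by auto
  have e1: "(?A * ?M) $$ (s,t) = (\<Sum>u<d. ?A $$ (s,u) * Sig u t)" if "t < d" for t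
    using A M s that by (simp add: scalar_prod_def imat_def lessThan_atLeast0 row_def col_def)
  have "(\<Sum>t<d. (?A * ?M) $$ (s,t) * w t) = (\<Sum>t<d. \<Sum>u<d. ?A $$ (s,u) * Sig u t * w t)"
    by (intro sum.cong refl) (simp add: e1 sum_distrib_right)
  also have "\<dots> = (\<Sum>u<d. \<Sum>t<d. ?A $$ (s,u) * Sig u t * w t)" by (rule sum.swap)
  also have "\<dots> = (\<Sum>u<d. ?A $$ (s,u) * matvec d Sig w u)"
    by (intro sum.cong refl) (simp add: matvec_def sum_distrib_left mult.assoc)
  finally have eq: "(\<Sum>t<d. (?A * ?M) $$ (s,t) * w t) = (\<Sum>u<d. ?A $$ (s,u) * matvec d Sig w u)" .
  have "(\<Sum>t<d. (?A * ?M) $$ (s,t) * w t) = (\<Sum>t<d. (if s = t then det ?M else 0) * w t)"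
    using s by (intro sum.cong refl) (simp add: AM)
  also have "\<dots> = (\<Sum>t<d. if t = s then det ?M * w t else 0)" by (intro sum.cong) auto
  also have "\<dots> = det ?M * w s" using s by simp
  finally have "det ?M * w s = (\<Sum>u<d. ?A $$ (s,u) * matvec d Sig w u)" using eq by simp
  moreover have "int n dvd (\<Sum>u<d. ?A $$ (s,u) * matvec d Sig w u)"
    using h by (intro dvd_sum) auto
  ultimately have "int n dvd w s * det ?M" by (simp add: mult.commute)
  moreover have "coprime (int n) (det ?M)"
    using od n by (simp add: coprime_commute[of 2] coprime_right_2_iff_odd)
  ultimately show ?thesis by (simp add: coprime_dvd_mult_left_iff)
qed

lemma finite_matrix_box:
  assumes "finite A"
  shows "finite {M :: nat \<Rightarrow> nat \<Rightarrow> int. \<forall>s t. (s < d \<and> t < d \<longrightarrow> M s t \<in> A) \<and> (\<not> (s < d \<and> t < d) \<longrightarrow> M s t = 0)}"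
proof (rule finite_subset)
  show "finite {M. \<forall>s. (s \<in> {..<d} \<longrightarrow> M s \<in> box d A) \<and> (s \<notin> {..<d} \<longrightarrow> M s = (\<lambda>_. 0))}"
    by (rule finite_set_of_finite_funs) (auto intro: finite_box assms)
qed (auto simp: box_def)

lemma finite_mats: "finite (mats n d)"
  by (rule finite_subset[OF _ finite_matrix_box[of "{0..<int n}" d]]) (auto simp: mats_def)

lemma mats_nonempty: assumes "n \<ge> 2" shows "(\<lambda>s t. if s < d \<and> t < d \<and> s = t then 1 else 0) \<in> mats n d"
proof -
  have "imat d (\<lambda>s t. if s < d \<and> t < d \<and> s = t then 1 else 0) = 1\<^sub>m d"
    unfolding imat_def by (intro eq_matI) auto
  then show ?thesis unfolding mats_alt using assms by auto
qed

(* Decomposition of mats n d along a column s0: every \<Sigma> is a choice of the other columns R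
   together with a column c such that the completed matrix has odd determinant. *)

definition other_cols :: "nat \<Rightarrow> nat \<Rightarrow> nat \<Rightarrow> (nat \<Rightarrow> nat \<Rightarrow> int) set" where
  "other_cols n d s0 = {R. \<forall>s t. (s < d \<and> t < d \<and> t \<noteq> s0 \<longrightarrow> 0 \<le> R s t \<and> R s t < int n) \<and>
                        (\<not> (s < d \<and> t < d \<and> t \<noteq> s0) \<longrightarrow> R s t = 0)}"

definition with_col :: "nat \<Rightarrow> (nat \<Rightarrow> nat \<Rightarrow> int) \<Rightarrow> (nat \<Rightarrow> int) \<Rightarrow> (nat \<Rightarrow> nat \<Rightarrow> int)" where
  "with_col s0 R c = (\<lambda>s t. if t = s0 then c s else R s t)"

definition good_cols :: "nat \<Rightarrow> nat \<Rightarrow> nat \<Rightarrow> (nat \<Rightarrow> nat \<Rightarrow> int) \<Rightarrow> (nat \<Rightarrow> int) set" where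
  "good_cols n d s0 R = {c \<in> box d {0..<int n}. odd (det (imat d (with_col s0 R c)))}"

lemma finite_other_cols: "finite (other_cols n d s0)"
  by (rule finite_subset[OF _ finite_matrix_box[of "insert 0 {0..<int n}" d]]) (auto simp: other_cols_def)

lemma finite_good_cols: "finite (good_cols n d s0 R)"
  unfolding good_cols_def by (rule finite_subset[OF _ finite_box[of "{0..<int n}" d]]) auto

lemma with_col_inj: "inj_on (\<lambda>(R, c). with_col s0 R c) (Sigma (other_cols n d s0) (good_cols n d s0))"
proof (rule inj_onI, clarsimp)
  fix R c R' c'
  assume R: "R \<in> other_cols n d s0" and c: "c \<in> good_cols n d s0 R" and R': "R' \<in> other_cols n d s0"
    and c': "c' \<in> good_cols n d s0 R'" and e: "with_col s0 R c = with_col s0 R' c'"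
  have "c = c'"
  proof
    fix s show "c s = c' s" using fun_cong[OF fun_cong[OF e, of s], of s0] unfolding with_col_def by simp
  qed
  moreover have "R = R'"
  proof (intro ext)
    fix s t show "R s t = R' s t"
    proof (cases "t = s0")
      case True then show ?thesis using R R' unfolding other_cols_def by auto
    next
      case False then show ?thesis using fun_cong[OF fun_cong[OF e, of s], of t] unfolding with_col_def by simp
    qed
  qed
  ultimately show "R = R' \<and> c = c'" by simp
qed

lemma mats_col_decomp: assumes "s0 < d"
  shows "mats n d = (\<lambda>(R, c). with_col s0 R c) ` (Sigma (other_cols n d s0) (good_cols n d s0))"
proof (intro equalityI subsetI)
  fix Sig assume S: "Sig \<in> mats n d"
  define R where "R = (\<lambda>s t. if t = s0 then 0 else Sig s t)"
  define c where "c = (\<lambda>s. Sig s s0)"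
  have e: "Sig = with_col s0 R c" unfolding with_col_def R_def c_def by (intro ext) auto
  have "R \<in> other_cols n d s0" using S unfolding R_def other_cols_def mats_alt by auto
  moreover have "c \<in> good_cols n d s0 R" using S assms e unfolding good_cols_def c_def box_def mats_alt by auto
  ultimately show "Sig \<in> (\<lambda>(R, c). with_col s0 R c) ` (Sigma (other_cols n d s0) (good_cols n d s0))"
    using e by blast
next
  fix Sig assume "Sig \<in> (\<lambda>(R, c). with_col s0 R c) ` (Sigma (other_cols n d s0) (good_cols n d s0))"
  then obtain R c where R: "R \<in> other_cols n d s0" and c: "c \<in> good_cols n d s0 R" and e: "Sig = with_col s0 R c"
    by auto
  have "\<forall>s t. (s < d \<and> t < d \<longrightarrow> 0 \<le> with_col s0 R c s t \<and> with_col s0 R c s t < int n) \<and>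
          (\<not> (s < d \<and> t < d) \<longrightarrow> with_col s0 R c s t = 0)"
    using R c assms unfolding other_cols_def good_cols_def box_def with_col_def by auto
  moreover have "odd (det (imat d (with_col s0 R c)))" using c unfolding good_cols_def by auto
  ultimately show "Sig \<in> mats n d" unfolding mats_alt e by blast
qed

lemma sum_mats_col_decomp: assumes "s0 < d"
  shows "(\<Sum>Sig\<in>mats n d. g Sig) = (\<Sum>R\<in>other_cols n d s0. \<Sum>c\<in>good_cols n d s0 R. g (with_col s0 R c))"
  unfolding mats_col_decomp[OF assms] sum.reindex[OF with_col_inj]
  by (simp add: sum.Sigma finite_other_cols finite_good_cols split_def)

lemma card_mats_col_decomp: assumes "s0 < d"
  shows "card (mats n d) = (\<Sum>R\<in>other_cols n d s0. card (good_cols n d s0 R))"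
  using sum_mats_col_decomp[OF assms, of "\<lambda>_. 1::nat"] by simp

(* Laplace expansion along column s0: the determinant is linear in that column, with coefficients
   the cofactors, which do not depend on the column itself. *)
lemma det_with_col: assumes "s0 < d"
  shows "det (imat d (with_col s0 R c)) = (\<Sum>i<d. c i * cofactor (imat d (with_col s0 R (\<lambda>_. 0))) i s0)"
proof -
  have "det (imat d (with_col s0 R c)) = (\<Sum>i<d. imat d (with_col s0 R c) $$ (i, s0) * cofactor (imat d (with_col s0 R c)) i s0)"
    by (rule laplace_expansion_column[OF imat_carrier assms])
  also have "\<dots> = (\<Sum>i<d. c i * cofactor (imat d (with_col s0 R (\<lambda>_. 0))) i s0)"
  proof (intro sum.cong refl)
    fix i assume i: "i \<in> {..<d}"
    have "mat_delete (imat d (with_col s0 R c)) i s0 = mat_delete (imat d (with_col s0 R (\<lambda>_. 0))) i s0"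
      unfolding mat_delete_def imat_def
      by (intro eq_matI) (auto simp: with_col_def)
    then show "imat d (with_col s0 R c) $$ (i, s0) * cofactor (imat d (with_col s0 R c)) i s0
         = c i * cofactor (imat d (with_col s0 R (\<lambda>_. 0))) i s0"
      using i assms unfolding cofactor_def by (simp add: imat_def with_col_def)
  qed
  finally show ?thesis .
qed

(* A linear form with an odd coefficient is odd on exactly half of the box [0,n)^d (n even):
   flipping the parity of that coordinate is an involution exchanging odd and even values. *)
lemma card_odd_linear_form:
  fixes \<alpha> :: "nat \<Rightarrow> int"
  assumes n: "even n" and s1: "s1 < d" and od: "odd (\<alpha> s1)"
  shows "2 * card {c \<in> box d {0..<int n}. odd (\<Sum>i<d. c i * \<alpha> i)} = n ^ d"
proof -
  define L where "L = (\<lambda>c::nat\<Rightarrow>int. \<Sum>i<d. c i * \<alpha> i)"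
  define \<tau> where "\<tau> = (\<lambda>c::nat\<Rightarrow>int. c(s1 := (if even (c s1) then c s1 + 1 else c s1 - 1)))"
  let ?C = "box d {0..<int n}"
  let ?V = "{c \<in> ?C. odd (L c)}"
  have tauC: "\<tau> c \<in> ?C" if "c \<in> ?C" for c
  proof -
    have "0 \<le> c s1" "c s1 < int n" using that s1 unfolding box_def by auto
    then have "0 \<le> (if even (c s1) then c s1 + 1 else c s1 - 1)"
      "(if even (c s1) then c s1 + 1 else c s1 - 1) < int n" using n by (auto elim!: evenE oddE)
    then show ?thesis using that s1 unfolding box_def \<tau>_def by auto
  qed
  have Lsplit: "L c = (\<Sum>i\<in>{..<d} - {s1}. c i * \<alpha> i) + c s1 * \<alpha> s1" for c
    unfolding L_def using s1 by (subst sum.remove[of _ s1]) auto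
  have Ltau: "odd (L (\<tau> c)) \<longleftrightarrow> even (L c)" for c
  proof -
    have "(\<Sum>i\<in>{..<d} - {s1}. \<tau> c i * \<alpha> i) = (\<Sum>i\<in>{..<d} - {s1}. c i * \<alpha> i)"
      unfolding \<tau>_def by (intro sum.cong) auto
    moreover have "\<tau> c s1 * \<alpha> s1 = c s1 * \<alpha> s1 + (if even (c s1) then \<alpha> s1 else - \<alpha> s1)"
      unfolding \<tau>_def by (auto simp: algebra_simps)
    ultimately have "L (\<tau> c) = L c + (if even (c s1) then \<alpha> s1 else - \<alpha> s1)"
      using Lsplit[of "\<tau> c"] Lsplit[of c] by simp
    then show ?thesis using od by auto
  qed
  have "bij_betw \<tau> ?V (?C - ?V)"
    by (rule bij_betw_byWitness[where f' = \<tau>]) (use tauC Ltau in \<open>auto simp: \<tau>_def\<close>)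
  then have "card ?V = card (?C - ?V)" by (rule bij_betw_same_card)
  also have "\<dots> = card ?C - card ?V" by (rule card_Diff_subset) (auto intro: finite_subset[OF _ finite_box])
  finally have "2 * card ?V = card ?C"
    using card_mono[OF finite_box[of "{0..<int n}" d], of ?V] by auto
  also have "card ?C = n ^ d" by (subst card_box) auto
  finally show ?thesis unfolding L_def .
qed

(* For fixed other columns R, either no column completes R to a matrix with odd determinant, or
   exactly half of all columns do, since the determinant is a linear form in the free column. *)
lemma card_good_cols:
  assumes "s0 < d" "even n"
  shows "good_cols n d s0 R = {} \<or> 2 * card (good_cols n d s0 R) = n ^ d"
proof (cases "\<exists>s1<d. odd (cofactor (imat d (with_col s0 R (\<lambda>_. 0))) s1 s0)")
  case False
  have "even (det (imat d (with_col s0 R c)))" for c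
    unfolding det_with_col[OF assms(1)] using False by (intro dvd_sum) auto
  then show ?thesis unfolding good_cols_def by auto
next
  case True
  then obtain s1 where "s1 < d" "odd (cofactor (imat d (with_col s0 R (\<lambda>_. 0))) s1 s0)" by auto
  from card_odd_linear_form[where \<alpha> = "\<lambda>i. cofactor (imat d (with_col s0 R (\<lambda>_. 0))) i s0", OF assms(2) this]
  show ?thesis
    unfolding good_cols_def det_with_col[OF assms(1)] by simp
qed

(* Elementary estimates for the sums \<Sum>_c min 1 ((y/c)^(2F)) that bound the filter tails:
   O(y^(2F)) for y \<le> 1 and O(y) for y \<ge> 1.  Both rest on the telescoping bound for \<Sum> 1/c^2. *)

lemma sum_inv_sq_tail: assumes "K \<ge> 1" shows "(\<Sum>c\<in>{K+1..K+p}. 1 / (real c)^2) \<le> 1 / real K - 1 / real (K + p)"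
proof (induction p)
  case 0 then show ?case by simp
next
  case (Suc p)
  have "(\<Sum>c\<in>{K+1..K+Suc p}. 1 / (real c)^2) = (\<Sum>c\<in>{K+1..K+p}. 1 / (real c)^2) + 1 / (real (K + Suc p))^2"
    by simp
  also have "\<dots> \<le> 1 / real K - 1 / real (K + p) + 1 / (real (K + Suc p))^2" using Suc by simp
  also have "1 / (real (K + Suc p))^2 \<le> 1 / real (K + p) - 1 / real (K + Suc p)"
  proof -
    define a where "a = real (K + p)"
    have a: "a \<ge> 1" using assms unfolding a_def by simp
    have e: "real (K + Suc p) = a + 1" unfolding a_def by simp
    have "1 / (a + 1)^2 \<le> 1 / a - 1 / (a + 1)"
    proof -
      have "1 / (a + 1)^2 \<le> 1 / (a * (a + 1))"
        using a by (intro divide_left_mono) (auto simp: power2_eq_square)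
      also have "1 / (a * (a + 1)) = 1 / a - 1 / (a + 1)" using a by (simp add: field_simps)
      finally show ?thesis .
    qed
    then show ?thesis unfolding e a_def[symmetric] .
  qed
  finally show ?case by simp
qed

lemma sum_inv_sq: "(\<Sum>c\<in>{1..M}. 1 / (real c)^2) \<le> 2"
proof (cases "M = 0")
  case False
  have "{1..M} = insert 1 {1+1..1+(M-1)}" using False by auto
  then have "(\<Sum>c\<in>{1..M}. 1 / (real c)^2) = 1 + (\<Sum>c\<in>{1+1..1+(M-1)}. 1 / (real c)^2)" by simp
  also have "\<dots> \<le> 1 + (1 / real 1 - 1 / real (1 + (M-1)))" using sum_inv_sq_tail[of 1 "M-1"] by simp
  also have "\<dots> \<le> 2" by simp
  finally show ?thesis .
qed simp

(* For y \<le> 1 every term is at most y^(2F)/c^2. *)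
lemma sum_min_pow_small: assumes "0 < y" "y \<le> 1" "F \<ge> 1"
  shows "(\<Sum>c\<in>{1..M}. min 1 ((y / real c) ^ (2*F))) \<le> 2 * y ^ (2*F)"
proof -
  have "(\<Sum>c\<in>{1..M}. min 1 ((y / real c) ^ (2*F))) \<le> (\<Sum>c\<in>{1..M}. y ^ (2*F) * (1 / (real c)^2))"
  proof (intro sum_mono)
    fix c assume c: "c \<in> {1..M}"
    have c1: "1 \<le> real c" using c by simp
    have "(real c)^2 \<le> (real c)^(2*F)" using c1 assms(3) by (intro power_increasing) auto
    then have "y ^ (2*F) / (real c)^(2*F) \<le> y ^ (2*F) / (real c)^2"
      using c1 assms(1) by (intro divide_left_mono) auto
    then show "min 1 ((y / real c) ^ (2*F)) \<le> y ^ (2*F) * (1 / (real c)^2)"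
      by (simp add: power_divide)
  qed
  also have "\<dots> = y ^ (2*F) * (\<Sum>c\<in>{1..M}. 1 / (real c)^2)" by (simp add: sum_distrib_left)
  also have "\<dots> \<le> y ^ (2*F) * 2" using sum_inv_sq[of M] assms(1) by (intro mult_left_mono) auto
  finally show ?thesis by simp
qed

lemma min_pow_le_sq:
  fixes y Y c :: real
  assumes y: "0 < y" "y \<le> Y" and c: "0 < c" and F: "F \<ge> 1"
  shows "min 1 ((y / c) ^ (2*F)) \<le> (Y / c)^2"
proof (cases "Y / c \<ge> 1")
  case True
  then have "1 \<le> (Y / c)^2" by (simp add: one_le_power)
  then show ?thesis by simp
next
  case False
  have yc: "0 \<le> y / c" "y / c \<le> Y / c" using y c by (auto intro: divide_right_mono)
  have "min 1 ((y / c) ^ (2*F)) \<le> (y / c) ^ 2"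
    using yc False F power_decreasing[of 2 "2*F" "y / c"] by auto
  also have "\<dots> \<le> (Y / c) ^ 2" using yc by (intro power_mono) auto
  finally show ?thesis .
qed

(* For y \<ge> 1 the first \<lceil>y\<rceil> terms are at most 1 and the rest at most y^2/c^2. *)
lemma sum_min_pow_large: assumes "0 < y" "F \<ge> 1"
  shows "(\<Sum>c\<in>{1..M}. min 1 ((y / real c) ^ (2*F))) \<le> 3 * max y 1"
proof -
  define Y where "Y = max y 1"
  have Y1: "1 \<le> Y" "y \<le> Y" unfolding Y_def by auto
  define K where "K = nat \<lceil>Y\<rceil>"
  have K1: "K \<ge> 1" using Y1 unfolding K_def by linarith
  have KY: "Y \<le> real K" "real K \<le> Y + 1" unfolding K_def using Y1 by linarith+
  define g where "g = (\<lambda>c::nat. min 1 ((y / real c) ^ (2*F)))"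
  have g0: "0 \<le> g c" for c unfolding g_def by simp
  have g1: "g c \<le> 1" for c unfolding g_def by simp
  have g2: "g c \<le> Y^2 * (1 / (real c)^2)" if "c \<ge> 1" for c
    unfolding g_def using min_pow_le_sq[OF assms(1) Y1(2) _ assms(2), of "real c"] that
    by (simp add: power_divide)
  have "(\<Sum>c\<in>{1..M}. g c) \<le> (\<Sum>c\<in>{1..K+M}. g c)"
    by (rule sum_mono2) (auto simp: g0)
  also have "\<dots> = (\<Sum>c\<in>{1..K}. g c) + (\<Sum>c\<in>{K+1..K+M}. g c)"
    using K1 by (subst sum.ub_add_nat) auto
  also have "(\<Sum>c\<in>{1..K}. g c) \<le> (\<Sum>c\<in>{1..K}. 1)" by (intro sum_mono g1)
  also have "(\<Sum>c\<in>{K+1..K+M}. g c) \<le> (\<Sum>c\<in>{K+1..K+M}. Y^2 * (1 / (real c)^2))"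
    by (intro sum_mono g2) auto
  also have "\<dots> = Y^2 * (\<Sum>c\<in>{K+1..K+M}. 1 / (real c)^2)" by (simp add: sum_distrib_left)
  also have "\<dots> \<le> Y^2 * (1 / real K)"
  proof -
    have "(\<Sum>c\<in>{K+1..K+M}. 1 / (real c)^2) \<le> 1 / real K - 1 / real (K+M)" by (rule sum_inv_sq_tail[OF K1])
    moreover have "0 \<le> 1 / real (K+M)" by simp
    ultimately have "(\<Sum>c\<in>{K+1..K+M}. 1 / (real c)^2) \<le> 1 / real K" by linarith
    then show ?thesis by (intro mult_left_mono) auto
  qed
  also have "Y^2 * (1 / real K) \<le> Y"
    using KY Y1 by (simp add: power2_eq_square field_simps mult_left_mono)
  finally have "(\<Sum>c\<in>{1..M}. g c) \<le> real K + Y" by simp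
  also have "\<dots> \<le> 3 * Y" using KY Y1 by linarith
  finally show ?thesis unfolding g_def Y_def .
qed

lemma sum_comp_le_fibres:
  fixes g :: "int \<Rightarrow> real"
  assumes "finite X" "finite J" "\<And>x. x \<in> X \<Longrightarrow> \<psi> x \<in> J" "\<And>j. card {x \<in> X. \<psi> x = j} \<le> K"
    "\<And>j. j \<in> J \<Longrightarrow> 0 \<le> g j"
  shows "(\<Sum>x\<in>X. g (\<psi> x)) \<le> real K * (\<Sum>j\<in>J. g j)"
proof -
  have "(\<Sum>x\<in>X. g (\<psi> x)) = (\<Sum>j\<in>\<psi> ` X. \<Sum>x\<in>{x \<in> X. \<psi> x = j}. g (\<psi> x))"
    by (rule sum.image_gen[OF assms(1)])
  also have "\<dots> = (\<Sum>j\<in>\<psi> ` X. real (card {x \<in> X. \<psi> x = j}) * g j)"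
    by (intro sum.cong refl) simp
  also have "\<dots> \<le> (\<Sum>j\<in>\<psi> ` X. real K * g j)"
    using assms(3-5) by (intro sum_mono mult_right_mono) auto
  also have "\<dots> \<le> (\<Sum>j\<in>J. real K * g j)"
    using assms by (intro sum_mono2) auto
  finally show ?thesis by (simp add: sum_distrib_left)
qed

lemma progression_residue_cancel:
  assumes n: "n = 2 ^ k" and tk: "t < k" and u: "odd u"
    and e: "cred n (r + x1 * (2^t * u)) = cred n (r + x2 * (2^t * u))"
  shows "x1 mod 2 ^ (k - t) = x2 mod 2 ^ (k - t)"
proof -
  define m :: int where "m = 2 ^ (k - t)"
  have nm: "int n = 2^t * m" unfolding m_def n using tk by (simp add: power_add[symmetric])
  have "int n dvd ((r + x1 * (2^t * u)) - (r + x2 * (2^t * u)))"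
    using dvd_diff[OF cred_dvd[of n "r + x1 * (2^t * u)"] cred_dvd[of n "r + x2 * (2^t * u)"]] e by simp
  then have "2^t * m dvd 2^t * (u * (x1 - x2))" unfolding nm by (simp add: algebra_simps)
  then have "m dvd u * (x1 - x2)" by simp
  moreover have "coprime m u" unfolding m_def using u by (simp add: coprime_commute[of _ u])
  ultimately have "m dvd (x1 - x2)" by (simp add: coprime_dvd_mult_right_iff)
  then show ?thesis unfolding m_def by (simp add: mod_eq_dvd_iff)
qed

(* Hence the progression over x \<in> [0,n) hits each residue at most 2^t times: x \<mapsto> x div 2^(k-t)
   is injective on each fibre. *)
lemma card_fibre_line:
  assumes n: "n = 2 ^ k" and tk: "t < k" and u: "odd u"
  shows "card {x \<in> {0..<int n}. cred n (r + x * (2^t * u)) = j} \<le> 2 ^ t"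
proof -
  define m :: int where "m = 2 ^ (k - t)"
  have nm: "int n = 2^t * m" unfolding m_def n using tk by (simp add: power_add[symmetric])
  have m0: "m > 0" unfolding m_def by simp
  let ?A = "{x \<in> {0..<int n}. cred n (r + x * (2^t * u)) = j}"
  have inj: "inj_on (\<lambda>x. x div m) ?A"
  proof (rule inj_onI)
    fix x1 x2 assume "x1 \<in> ?A" "x2 \<in> ?A" "x1 div m = x2 div m"
    moreover have "x1 mod m = x2 mod m"
      unfolding m_def using \<open>x1 \<in> ?A\<close> \<open>x2 \<in> ?A\<close> by (intro progression_residue_cancel[OF n tk u, where r = r]) simp
    ultimately show "x1 = x2" by (metis div_mult_mod_eq)
  qed
  have img: "(\<lambda>x. x div m) ` ?A \<subseteq> {0..<2^t}"
  proof
    fix y assume "y \<in> (\<lambda>x. x div m) ` ?A"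
    then obtain x where x: "0 \<le> x" "x < 2^t * m" "y = x div m" using nm by auto
    have "x div m * m \<le> x" using m0 pos_mod_sign[of m x] div_mult_mod_eq[of x m] by linarith
    then have "x div m * m < 2^t * m" using x(2) by linarith
    then show "y \<in> {0..<2^t}" using x m0 by (simp add: pos_imp_zdiv_nonneg_iff)
  qed
  have "card ?A \<le> card {0..<(2::int)^t}" by (rule card_inj_on_le[OF inj img]) simp
  also have "\<dots> = 2^t" by simp
  finally show ?thesis .
qed

definition dyadic_set :: "nat \<Rightarrow> nat \<Rightarrow> int set" where
  "dyadic_set n t = {j \<in> {- (int n div 2)..<int n div 2}. (2::int)^t dvd j}"

lemma finite_dyadic_set: "finite (dyadic_set n t)" unfolding dyadic_set_def
  by (rule finite_subset[of _ "{-(int n div 2)..<int n div 2}"]) auto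

lemma zero_dyadic_set: "0 \<in> dyadic_set n t" if "n > 0" "even n" unfolding dyadic_set_def using that by auto

definition tail_energy :: "nat \<Rightarrow> nat \<Rightarrow> nat \<Rightarrow> nat \<Rightarrow> real" where
  "tail_energy n b F t = (\<Sum>j\<in>dyadic_set n t - {0}. (Hfilt n b F j)^2)"

lemma tail_energy_nonneg: "0 \<le> tail_energy n b F t" unfolding tail_energy_def by (intro sum_nonneg) auto

lemma line_energy_bound:
  assumes n: "n = 2 ^ k" and tk: "t < k" and u: "odd u" and r: "(2::int)^t dvd r"
    and b: "even b" "b \<ge> 2"
  shows "(\<Sum>x\<in>{0..<int n}. (Hfilt n b F (r + x * (2^t * u)))^2) \<le> 2^t * (1 + tail_energy n b F t)"
    and "(\<Sum>x\<in>{0..<int n}. (if \<not> int n dvd (r + x * (2^t * u)) then (Hfilt n b F (r + x * (2^t * u)))^2 else 0))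
           \<le> 2^t * tail_energy n b F t"
proof -
  have n0: "n > 0" using n by simp
  have ne: "even n" using n tk by (cases k) auto
  define \<psi> where "\<psi> = (\<lambda>x. cred n (r + x * (2^t * u)))"
  have tn: "(2::int)^t dvd int n" unfolding n using tk by (simp add: le_imp_power_dvd)
  have psiJ: "\<psi> x \<in> dyadic_set n t" for x
  proof -
    have "(2::int)^t dvd (r + x * (2^t * u)) - ((r + x * (2^t * u)) - \<psi> x)"
      using r unfolding \<psi>_def by (intro dvd_diff dvd_trans[OF tn cred_dvd]) auto
    then show ?thesis unfolding dyadic_set_def \<psi>_def using cred_range[OF n0 ne] by auto
  qed
  have Hpsi: "Hfilt n b F (r + x * (2^t * u)) = Hfilt n b F (\<psi> x)" for x
    unfolding \<psi>_def by (rule Hfilt_cong[OF n0 b(1) b(2) cred_dvd])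
  have dvdpsi: "int n dvd (r + x * (2^t * u)) \<longleftrightarrow> \<psi> x = 0" for x
    unfolding \<psi>_def using cred_eq0_iff[OF n0 ne] by simp
  have fc: "card {x \<in> {0..<int n}. \<psi> x = j} \<le> 2^t" for j
    unfolding \<psi>_def by (rule card_fibre_line[OF n tk u])
  have J0: "0 \<in> dyadic_set n t" by (rule zero_dyadic_set[OF n0 ne])
  have "(\<Sum>x\<in>{0..<int n}. (Hfilt n b F (r + x * (2^t * u)))^2) = (\<Sum>x\<in>{0..<int n}. (\<lambda>j. (Hfilt n b F j)^2) (\<psi> x))"
    by (simp add: Hpsi)
  also have "\<dots> \<le> real (2^t) * (\<Sum>j\<in>dyadic_set n t. (Hfilt n b F j)^2)"
    by (rule sum_comp_le_fibres[OF _ finite_dyadic_set psiJ fc]) auto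
  also have "(\<Sum>j\<in>dyadic_set n t. (Hfilt n b F j)^2) = 1 + tail_energy n b F t"
    unfolding tail_energy_def by (subst sum.remove[OF finite_dyadic_set J0]) simp
  finally show "(\<Sum>x\<in>{0..<int n}. (Hfilt n b F (r + x * (2^t * u)))^2) \<le> 2^t * (1 + tail_energy n b F t)" by simp
  have "(\<Sum>x\<in>{0..<int n}. (if \<not> int n dvd (r + x * (2^t * u)) then (Hfilt n b F (r + x * (2^t * u)))^2 else 0))
     = (\<Sum>x\<in>{0..<int n}. (\<lambda>j. if j \<noteq> 0 then (Hfilt n b F j)^2 else 0) (\<psi> x))"
    by (simp only: Hpsi dvdpsi)
  also have "\<dots> \<le> real (2^t) * (\<Sum>j\<in>dyadic_set n t. (\<lambda>j. if j \<noteq> 0 then (Hfilt n b F j)^2 else 0) j)"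
    by (rule sum_comp_le_fibres[OF _ finite_dyadic_set psiJ fc]) auto
  also have "(\<Sum>j\<in>dyadic_set n t. (\<lambda>j. if j \<noteq> 0 then (Hfilt n b F j)^2 else 0) j) = tail_energy n b F t"
    unfolding tail_energy_def by (subst sum.remove[OF finite_dyadic_set J0]) (auto intro: sum.cong)
  finally show "(\<Sum>x\<in>{0..<int n}. (if \<not> int n dvd (r + x * (2^t * u)) then (Hfilt n b F (r + x * (2^t * u)))^2 else 0))
           \<le> 2^t * tail_energy n b F t" by simp
qed

lemma Hfilt_sq_bound:
  assumes n: "n = 2 ^ k" and tk: "t < k" and b: "b \<ge> 2" and c: "1 \<le> c" "2 * (2^t * c) \<le> n"
  shows "(Hfilt n b F (int (2^t * c)))^2 \<le> min 1 ((2 * real n / ((real b - 1) * 2^t) / real c) ^ (2*F))"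
proof -
  have n0: "n > 0" using n by simp
  have ne: "even n" using n tk by (cases k) auto
  let ?j = "int (2^t * c)"
  have a1: "\<bar>Hfilt n b F ?j\<bar> \<le> 1" by (rule Hfilt_le1[OF b])
  have h1: "(Hfilt n b F ?j)^2 \<le> 1" using power_mono[OF a1 abs_ge_zero, of 2] by simp
  have j0: "?j \<noteq> 0" using c by simp
  have "int (2 * (2^t * c)) \<le> int n" using c(2) by (simp only: of_nat_le_iff)
  then have "2 * \<bar>?j\<bar> \<le> int n" by simp
  then have "\<bar>Hfilt n b F ?j\<bar> \<le> (2 * real n / ((real b - 1) * \<bar>real_of_int ?j\<bar>)) ^ F"
    by (rule Hfilt_decay[OF b n0 ne j0])
  also have "2 * real n / ((real b - 1) * \<bar>real_of_int ?j\<bar>) = 2 * real n / ((real b - 1) * 2^t) / real c"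
    by simp
  finally have "\<bar>Hfilt n b F ?j\<bar> \<le> (2 * real n / ((real b - 1) * 2^t) / real c) ^ F" .
  then have "\<bar>Hfilt n b F ?j\<bar>^2 \<le> ((2 * real n / ((real b - 1) * 2^t) / real c) ^ F)^2"
    by (intro power_mono) auto
  then have "(Hfilt n b F ?j)^2 \<le> (2 * real n / ((real b - 1) * 2^t) / real c) ^ (2*F)"
    by (simp add: power_mult[symmetric] mult.commute)
  with h1 show ?thesis by simp
qed

lemma dyadic_set_nonzero:
  assumes nM: "n = 2 * (2^t * M)"
  shows "dyadic_set n t - {0} \<subseteq> (\<lambda>c. int (2^t * c)) ` {1..M} \<union> (\<lambda>c. - int (2^t * c)) ` {1..M}"
proof
  fix j assume j: "j \<in> dyadic_set n t - {0}"
  then obtain q where q: "j = 2^t * q" unfolding dyadic_set_def by (auto elim: dvdE)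
  have q0: "q \<noteq> 0" using j q by auto
  have "- (int n div 2) \<le> j" "j < int n div 2" using j unfolding dyadic_set_def by auto
  then have h1: "2^t * (- int M) \<le> 2^t * q" "2^t * q < 2^t * int M" using q nM by auto
  have "\<bar>q\<bar> \<le> int M"
    using mult_left_le_imp_le[OF h1(1)] h1(2) by (simp add: mult_less_cancel_left_pos)
  then have "j = int (2^t * nat q) \<and> nat q \<in> {1..M} \<or> j = - int (2^t * nat (-q)) \<and> nat (-q) \<in> {1..M}"
    using q q0 by (cases "q > 0") auto
  then show "j \<in> (\<lambda>c. int (2^t * c)) ` {1..M} \<union> (\<lambda>c. - int (2^t * c)) ` {1..M}" by blast
qed

(* The dyadic tail energy S_t is at most twice the model sum with y = 2n/((b-1) 2^t), using the
   symmetry of H and the pointwise bound. *)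
lemma tail_energy_bound:
  assumes n: "n = 2 ^ k" and tk: "t < k" and b: "b \<ge> 2" and F: "F \<ge> 1"
  defines "y \<equiv> 2 * real n / ((real b - 1) * 2^t)"
  shows "tail_energy n b F t \<le> 2 * (\<Sum>c\<in>{1..2^(k-t-1)}. min 1 ((y / real c) ^ (2*F)))"
proof -
  have n0: "n > 0" using n by simp
  have ne: "even n" using n tk by (cases k) auto
  define Mh :: nat where "Mh = 2^(k-t-1)"
  have nM: "n = 2 * (2^t * Mh)" unfolding n Mh_def using tk
    by (simp add: power_add[symmetric] power_Suc[symmetric])
  let ?P = "(\<lambda>c. int (2^t * c)) ` {1..Mh}"
  let ?N = "(\<lambda>c. - int (2^t * c)) ` {1..Mh}"
  have sub: "dyadic_set n t - {0} \<subseteq> ?P \<union> ?N" by (rule dyadic_set_nonzero[OF nM])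
  have fin: "finite (?P \<union> ?N)" by simp
  have "tail_energy n b F t \<le> (\<Sum>j\<in>?P \<union> ?N. (Hfilt n b F j)^2)"
    unfolding tail_energy_def by (rule sum_mono2[OF fin sub]) auto
  also have "\<dots> \<le> (\<Sum>j\<in>?P. (Hfilt n b F j)^2) + (\<Sum>j\<in>?N. (Hfilt n b F j)^2)"
  proof -
    have "(\<Sum>j\<in>?P \<union> ?N. (Hfilt n b F j)^2) + (\<Sum>j\<in>?P \<inter> ?N. (Hfilt n b F j)^2)
        = (\<Sum>j\<in>?P. (Hfilt n b F j)^2) + (\<Sum>j\<in>?N. (Hfilt n b F j)^2)"
      by (rule sum.union_inter) auto
    moreover have "0 \<le> (\<Sum>j\<in>?P \<inter> ?N. (Hfilt n b F j)^2)" by (intro sum_nonneg) auto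
    ultimately show ?thesis by linarith
  qed
  also have "(\<Sum>j\<in>?P. (Hfilt n b F j)^2) = (\<Sum>c\<in>{1..Mh}. (Hfilt n b F (int (2^t * c)))^2)"
    by (subst sum.reindex) (auto simp: inj_on_def)
  also have "(\<Sum>j\<in>?N. (Hfilt n b F j)^2) = (\<Sum>c\<in>{1..Mh}. (Hfilt n b F (int (2^t * c)))^2)"
    by (subst sum.reindex) (auto simp: inj_on_def Hfilt_neg[OF n0 ne])
  also have "(\<Sum>c\<in>{1..Mh}. (Hfilt n b F (int (2^t * c)))^2) \<le> (\<Sum>c\<in>{1..Mh}. min 1 ((y / real c) ^ (2*F)))"
  proof (intro sum_mono)
    fix c assume c: "c \<in> {1..Mh}"
    then have "1 \<le> c" "2 * (2^t * c) \<le> n" using nM by auto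
    then show "(Hfilt n b F (int (2^t * c)))^2 \<le> min 1 ((y / real c) ^ (2*F))"
      unfolding y_def by (rule Hfilt_sq_bound[OF n tk b])
  qed
  finally show ?thesis unfolding Mh_def by simp
qed

lemma energy_shape_bound:
  fixes S \<alpha> \<beta> :: real
  assumes "0 \<le> S" "S \<le> \<alpha>" "1 + S \<le> \<beta>"
  shows "2 * real d * S * (1 + S) ^ (d - 1) \<le> 2 * 2 ^ d * \<alpha> * \<beta> ^ (d - 1)"
proof -
  have dpow: "real d \<le> 2 ^ d" using of_nat_mono[OF less_imp_le[OF less_exp[of d]]] by simp
  have "(1 + S) ^ (d - 1) \<le> \<beta> ^ (d - 1)" using assms by (intro power_mono) auto
  then have "S * (1 + S) ^ (d - 1) \<le> \<alpha> * \<beta> ^ (d - 1)"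
    using assms by (intro mult_mono) auto
  then have "real d * (S * (1 + S) ^ (d - 1)) \<le> 2 ^ d * (\<alpha> * \<beta> ^ (d - 1))"
    by (rule mult_mono[OF dpow]) (use assms in auto)
  then show ?thesis by (simp add: mult_ac)
qed

lemma energy_bound_large:
  fixes S z :: real
  assumes S0: "0 \<le> S" and d1: "1 \<le> d" and S: "S \<le> 28 * z" "1 + S \<le> 28 * z"
  shows "2 * real d * S * (1 + S) ^ (d - 1) \<le> (320 * z) ^ d"
proof -
  define w where "w = 28 * z"
  have w0: "0 < w" using S S0 unfolding w_def by linarith
  have "2 * real d * S * (1 + S) ^ (d - 1) \<le> 2 * 2 ^ d * w * w ^ (d - 1)"
    using S unfolding w_def by (rule energy_shape_bound[OF S0])
  also have "\<dots> = 2 * (2 * w) ^ d"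
    using d1 by (cases d) (simp_all add: mult.assoc power_mult_distrib)
  also have "\<dots> \<le> 2 ^ d * (2 * w) ^ d"
    using power_increasing[OF d1, of "2::real"] w0 by (intro mult_right_mono) auto
  also have "\<dots> = (2 * (2 * w)) ^ d" by (simp only: power_mult_distrib)
  also have "\<dots> \<le> (320 * z) ^ d" using w0 unfolding w_def by (intro power_mono) auto
  finally show ?thesis .
qed

lemma energy_bound_small:
  fixes S z :: real
  assumes S0: "0 \<le> S" and d1: "1 \<le> d" and z0: "0 < z" and S: "S \<le> 4 * (4 * z) ^ d" "1 + S \<le> 5"
  shows "2 * real d * S * (1 + S) ^ (d - 1) \<le> (320 * z) ^ d"
proof -
  have "2 * real d * S * (1 + S) ^ (d - 1) \<le> 2 * 2 ^ d * (4 * (4 * z) ^ d) * 5 ^ (d - 1)"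
    using S by (rule energy_shape_bound[OF S0])
  also have "\<dots> \<le> 2 * 2 ^ d * (4 * (4 * z) ^ d) * 5 ^ d"
    using z0 by (intro mult_left_mono power_increasing) auto
  also have "\<dots> = 8 * (40 * z) ^ d"
  proof -
    have "(2::real) ^ d * (4 ^ d * 5 ^ d) = (2 * (4 * 5)) ^ d" by (simp only: power_mult_distrib)
    then show ?thesis by (simp add: power_mult_distrib)
  qed
  also have "\<dots> \<le> 8 ^ d * (40 * z) ^ d"
    using power_increasing[OF d1, of "8::real"] z0 by (intro mult_right_mono) auto
  also have "\<dots> = (8 * (40 * z)) ^ d" by (simp only: power_mult_distrib)
  finally show ?thesis by simp
qed

lemma energy_estimate:
  fixes S m b y :: real and d F :: nat
  assumes S0: "0 \<le> S" and m0: "0 < m" and b2: "2 \<le> b" and d1: "1 \<le> d" and dF: "d \<le> 2 * F"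
    and y: "y = 2 * m / (b - 1)"
    and hA: "1 \<le> y \<Longrightarrow> S \<le> 6 * y"
    and hB: "y \<le> 1 \<Longrightarrow> S \<le> 4 * y ^ (2*F)"
  shows "2 * real d * S * (1 + S) ^ (d - 1) / m ^ d \<le> 320 ^ d / b ^ d"
proof -
  define z where "z = m / b"
  have z0: "0 < z" unfolding z_def using m0 b2 by simp
  have y0: "0 \<le> y" unfolding y using m0 b2 by simp
  have yz: "y \<le> 4 * z" unfolding y z_def using m0 b2 by (simp add: field_simps)
  have "2 * real d * S * (1 + S) ^ (d - 1) \<le> (320 * z) ^ d"
  proof (cases "1 \<le> y")
    case True
    then show ?thesis using hA yz by (intro energy_bound_large[OF S0 d1]) linarith+
  next
    case False
    have "y ^ (2*F) \<le> (4 * z) ^ d"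
      using False y0 yz dF power_decreasing[of d "2*F" y] power_mono[of y "4 * z" d] by auto
    moreover have "y ^ (2*F) \<le> 1" using False y0 by (simp add: power_le_one)
    ultimately show ?thesis using hB False by (intro energy_bound_small[OF S0 d1 z0]) linarith+
  qed
  then have "2 * real d * S * (1 + S) ^ (d - 1) / m ^ d \<le> (320 * z) ^ d / m ^ d"
    using m0 by (intro divide_right_mono) auto
  also have "\<dots> = 320 ^ d / b ^ d" unfolding z_def using m0 b2 by (simp add: power_mult_distrib power_divide)
  finally show ?thesis .
qed

(* Union bound combined with Fubini: if every vector in V \<subseteq> A^d has some "exceptional" coordinate
   (P s (c s)), then the sum over V of a product of nonnegative factors is at most d times the
   product of one exceptional coordinate sum \<alpha> and d - 1 full coordinate sums \<beta>. *)
lemma sum_prod_exceptional_coord: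
  fixes h :: "nat \<Rightarrow> int \<Rightarrow> real"
  assumes A: "finite A" and V: "V \<subseteq> box d A" and exc: "\<And>c. c \<in> V \<Longrightarrow> \<exists>s<d. P s (c s)"
    and h0: "\<And>s x. 0 \<le> h s x"
    and full: "\<And>s. s < d \<Longrightarrow> (\<Sum>x\<in>A. h s x) \<le> \<beta>"
    and part: "\<And>s. s < d \<Longrightarrow> (\<Sum>x\<in>A. if P s x then h s x else 0) \<le> \<alpha>"
  shows "(\<Sum>c\<in>V. \<Prod>s<d. h s (c s)) \<le> real d * \<alpha> * \<beta> ^ (d - 1)"
proof -
  define f where "f = (\<lambda>s1 s x. if s = s1 then (if P s x then h s x else 0) else h s x)"
  have f0: "0 \<le> f s1 s x" for s1 s x unfolding f_def using h0 by simp
  have pt: "(\<Prod>s<d. h s (c s)) \<le> (\<Sum>s1<d. \<Prod>s<d. f s1 s (c s))" if cV: "c \<in> V" for c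
  proof -
    obtain s1 where s1: "s1 < d" "P s1 (c s1)" using exc[OF cV] by auto
    have "(\<Prod>s<d. h s (c s)) = (\<Prod>s<d. f s1 s (c s))"
      unfolding f_def using s1 by (intro prod.cong refl) auto
    also have "\<dots> \<le> (\<Sum>s1<d. \<Prod>s<d. f s1 s (c s))"
      using s1 f0 by (intro member_le_sum prod_nonneg) auto
    finally show ?thesis .
  qed
  have "(\<Sum>c\<in>V. \<Prod>s<d. h s (c s)) \<le> (\<Sum>c\<in>box d A. \<Sum>s1<d. \<Prod>s<d. f s1 s (c s))"
    using pt f0 V by (intro order.trans[OF sum_mono sum_mono2] finite_box A sum_nonneg prod_nonneg) auto
  also have "\<dots> = (\<Sum>s1<d. \<Prod>s<d. \<Sum>x\<in>A. f s1 s x)"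
    by (subst sum.swap) (intro sum.cong refl sum_prod_box A)
  also have "\<dots> \<le> (\<Sum>s1<d. \<Prod>s<d. (if s = s1 then \<alpha> else \<beta>))"
    using full part f0 by (intro sum_mono prod_mono conjI sum_nonneg) (auto simp: f_def)
  also have "\<dots> = (\<Sum>s1<d. \<alpha> * \<beta> ^ (d - 1))"
    by (intro sum.cong refl) (simp add: prod.If_cases Int_absorb1 Diff_eq[symmetric] card_Diff_singleton)
  finally show ?thesis by simp
qed

lemma matvec_with_col:
  assumes R: "R \<in> other_cols n d s0" and s: "s < d" and s0: "s0 < d"
  shows "matvec d (with_col s0 R c) v s = matvec d R v s + c s * v s0"
proof -
  have "matvec d (with_col s0 R c) v s = (\<Sum>t<d. (if t = s0 then c s else R s t) * v t)"
    unfolding matvec_def with_col_def using s by simp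
  also have "\<dots> = (\<Sum>t<d. R s t * v t + (if t = s0 then c s * v t else 0))"
    using R unfolding other_cols_def by (intro sum.cong refl) auto
  also have "\<dots> = matvec d R v s + c s * v s0"
    using s s0 by (simp add: sum.distrib matvec_def)
  finally show ?thesis .
qed

(* Each coordinate of
   \<Sigma>v runs over a progression r + c 2^t u, and by invertibility mod n some coordinate is nonzero
   mod n; so sum_prod_exceptional_coord applies with the line energy bounds. *)
lemma column_energy_bound:
  assumes n: "n = 2 ^ k" and tk: "t < k" and u: "odd u" and b: "even b" "b \<ge> 2"
    and s0: "s0 < d" and vs0: "v s0 = 2^t * u" and vdvd: "\<forall>s<d. (2::int)^t dvd v s"
    and R: "R \<in> other_cols n d s0"
  shows "(\<Sum>c\<in>good_cols n d s0 R. (Gfilt n b F d (matvec d (with_col s0 R c) v))^2)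
         \<le> real d * (2^t * tail_energy n b F t) * (2^t * (1 + tail_energy n b F t)) ^ (d - 1)"
proof -
  define \<phi> where "\<phi> = (\<lambda>s (x::int). matvec d R v s + x * (2^t * u))"
  have rdvd: "(2::int)^t dvd matvec d R v s" for s
    unfolding matvec_def using vdvd by (auto intro!: dvd_sum)
  have mv: "matvec d (with_col s0 R c) v s = \<phi> s (c s)" if "s < d" for c s
    unfolding \<phi>_def using matvec_with_col[OF R that s0] vs0 by (simp add: mult.assoc)
  have G2: "(Gfilt n b F d (matvec d (with_col s0 R c) v))^2 = (\<Prod>s<d. (Hfilt n b F (\<phi> s (c s)))^2)" for c
    unfolding Gfilt_def prod_power_distrib using mv by (intro prod.cong) auto
  have exc: "\<exists>s<d. \<not> int n dvd \<phi> s (c s)" if c: "c \<in> good_cols n d s0 R" for c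
  proof (rule ccontr)
    assume "\<not> (\<exists>s<d. \<not> int n dvd \<phi> s (c s))"
    then have "\<forall>s<d. int n dvd matvec d (with_col s0 R c) v s" using mv by auto
    then have "int n dvd v s0"
      using c s0 n by (intro dvd_of_dvd_matvec[of d _ n k]) (auto simp: good_cols_def)
    then have "2^t * 2^(k-t) dvd 2^t * u" using vs0 n tk by (simp add: power_add[symmetric])
    then have "(2::int)^(k-t) dvd u" by simp
    then show False using u tk by (metis dvd_power dvd_trans zero_less_diff)
  qed
  show ?thesis
    unfolding G2
  proof (rule sum_prod_exceptional_coord[OF _ _ exc])
    show "good_cols n d s0 R \<subseteq> box d {0..<int n}" by (auto simp: good_cols_def)
    show "(\<Sum>x\<in>{0..<int n}. (Hfilt n b F (\<phi> s x))^2) \<le> 2^t * (1 + tail_energy n b F t)" for s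
      unfolding \<phi>_def by (rule line_energy_bound(1)[OF n tk u rdvd b])
    show "(\<Sum>x\<in>{0..<int n}. if \<not> int n dvd \<phi> s x then (Hfilt n b F (\<phi> s x))^2 else 0)
        \<le> 2^t * tail_energy n b F t" for s
      using line_energy_bound(2)[OF n tk u rdvd b] unfolding \<phi>_def by simp
  qed auto
qed

lemma dyadic_pivot:
  fixes v :: "nat \<Rightarrow> int"
  assumes vnz: "\<exists>s<d. v s \<noteq> 0" and vb: "\<forall>s<d. \<bar>v s\<bar> < 2 ^ k"
  obtains t s0 u where "t < k" "s0 < d" "odd u" "v s0 = 2^t * u" "\<forall>s<d. (2::int)^t dvd v s"
proof -
  define T where "T = {t. \<forall>s<d. (2::int)^t dvd v s}"
  obtain s' where s': "s' < d" "v s' \<noteq> 0" using vnz by auto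
  have Tk: "T \<subseteq> {..<k}"
  proof
    fix t assume "t \<in> T"
    then have "(2::int)^t \<le> \<bar>v s'\<bar>" using s' unfolding T_def by (intro zdvd_imp_le) auto
    then have "(2::int)^t < 2^k" using vb s' by (meson order.strict_trans1)
    then show "t \<in> {..<k}" by (simp add: power_less_imp_less_exp)
  qed
  have finT: "finite T" using Tk by (rule finite_subset) simp
  define t where "t = Max T"
  have tT: "t \<in> T" unfolding t_def using finT by (intro Max_in) (auto simp: T_def intro: exI[of _ 0])
  have "Suc t \<notin> T" using Max_ge[OF finT] unfolding t_def[symmetric] by fastforce
  then obtain s0 where s0: "s0 < d" "\<not> (2::int)^(Suc t) dvd v s0" unfolding T_def by auto
  have vdvd: "\<forall>s<d. (2::int)^t dvd v s" using tT unfolding T_def by simp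
  then obtain u where vs0: "v s0 = 2^t * u" using s0 by (auto elim: dvdE)
  have "odd u" using s0(2) vs0 by (auto elim: evenE)
  then show thesis using that tT Tk s0 vs0 vdvd by auto
qed

(* Averaging over the column decomposition: if for every choice R of the other columns the
   admissible columns contribute at most B, then the average over mats n d is at most 2B/n^d,
   since each nonempty fibre has exactly n^d/2 elements. *)
lemma sum_mats_le_column_bound:
  fixes g :: "(nat \<Rightarrow> nat \<Rightarrow> int) \<Rightarrow> real"
  assumes s0: "s0 < d" and n: "even n" "n > 0"
    and col: "\<And>R. R \<in> other_cols n d s0 \<Longrightarrow> (\<Sum>c\<in>good_cols n d s0 R. g (with_col s0 R c)) \<le> B"
  shows "(\<Sum>Sig\<in>mats n d. g Sig) \<le> real (card (mats n d)) * (2 * B / real n ^ d)"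
proof -
  have perR: "(\<Sum>c\<in>good_cols n d s0 R. g (with_col s0 R c)) \<le> real (card (good_cols n d s0 R)) * (2 * B / real n ^ d)"
    if R: "R \<in> other_cols n d s0" for R
    using card_good_cols[OF s0 n(1), of R]
  proof
    assume "2 * card (good_cols n d s0 R) = n ^ d"
    then have "2 * real (card (good_cols n d s0 R)) = real n ^ d" by (metis of_nat_mult of_nat_numeral of_nat_power)
    then show ?thesis using col[OF R] n(2) by (simp add: field_simps)
  qed simp
  have "(\<Sum>Sig\<in>mats n d. g Sig) = (\<Sum>R\<in>other_cols n d s0. \<Sum>c\<in>good_cols n d s0 R. g (with_col s0 R c))"
    by (rule sum_mats_col_decomp[OF s0])
  also have "\<dots> \<le> (\<Sum>R\<in>other_cols n d s0. real (card (good_cols n d s0 R)) * (2 * B / real n ^ d))"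
    by (intro sum_mono perR)
  also have "\<dots> = real (card (mats n d)) * (2 * B / real n ^ d)"
    by (simp add: card_mats_col_decomp[OF s0] sum_distrib_right sum_divide_distrib)
  finally show ?thesis .
qed

lemma avg_filter_energy:
  assumes n: "n = 2 ^ k" and b: "even b" "2 \<le> b" and d1: "1 \<le> d" and dF: "2 * d \<le> F"
    and vnz: "\<exists>s<d. v s \<noteq> 0" and vb: "\<forall>s<d. \<bar>v s\<bar> < int n"
  shows "(\<Sum>Sig\<in>mats n d. (Gfilt n b F d (matvec d Sig v))^2) \<le> real (card (mats n d)) * (320 ^ d / real b ^ d)"
proof -
  obtain t s0 u where tk: "t < k" and s0: "s0 < d" and u: "odd u" and vs0: "v s0 = 2^t * u"
    and vdvd: "\<forall>s<d. (2::int)^t dvd v s"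
    using dyadic_pivot[OF vnz, of k] vb n by auto
  have ne: "even n" using n tk by (cases k) auto
  define S where "S = tail_energy n b F t"
  define m :: real where "m = 2 ^ (k - t)"
  have m0: "0 < m" unfolding m_def by simp
  have nm: "real n = 2^t * m" unfolding m_def n using tk by (simp add: power_add[symmetric])
  have "(\<Sum>Sig\<in>mats n d. (Gfilt n b F d (matvec d Sig v))^2)
      \<le> real (card (mats n d)) * (2 * (real d * (2^t * S) * (2^t * (1 + S)) ^ (d - 1)) / real n ^ d)"
    using column_energy_bound[OF n tk u b s0 vs0 vdvd] unfolding S_def
    by (intro sum_mats_le_column_bound[OF s0 ne]) (auto simp: n)
  also have "2 * (real d * (2^t * S) * (2^t * (1 + S)) ^ (d - 1)) / real n ^ d
      = 2 * real d * S * (1 + S) ^ (d - 1) / m ^ d"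
    using d1 m0 unfolding nm by (cases d) (auto simp: power_mult_distrib)
  also have "\<dots> \<le> 320 ^ d / real b ^ d"
  proof (rule energy_estimate)
    define y where "y = 2 * m / (real b - 1)"
    have y0: "0 < y" unfolding y_def using m0 b by simp
    have F1: "F \<ge> 1" using d1 dF by simp
    have "S \<le> 2 * (\<Sum>c\<in>{1..2^(k-t-1)}. min 1 ((y / real c) ^ (2*F)))"
      using tail_energy_bound[OF n tk b(2) F1] unfolding S_def y_def nm by simp
    then show "1 \<le> y \<Longrightarrow> S \<le> 6 * y" "y \<le> 1 \<Longrightarrow> S \<le> 4 * y ^ (2*F)"
      using sum_min_pow_large[OF y0 F1, of "2^(k-t-1)"] sum_min_pow_small[OF y0 _ F1, of "2^(k-t-1)"]
      by auto
  qed (use b d1 dF m0 in \<open>auto simp: S_def tail_energy_nonneg\<close>)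
  finally show ?thesis by (simp add: mult_left_mono)
qed

(* Part (1).  The offsets o_i(j) and \<Sigma>(j - i) agree modulo n, so the periodic filter cannot
   distinguish them and \<mu>\<^sup>2(i) is independent of q. *)

lemma matvec_diff: "s < d \<Longrightarrow> matvec d Sig (\<lambda>s. j s - i s) s = matvec d Sig j s - matvec d Sig i s"
  unfolding matvec_def by (simp add: sum_subtractf right_diff_distrib)

lemma Gfilt_offs:
  assumes n0: "n > 0" and b: "even b" "2 \<le> b"
  shows "Gfilt n b F d (offs n d Sig q i j) = Gfilt n b F d (matvec d Sig (\<lambda>s. j s - i s))"
proof (rule Gfilt_cong[OF n0 b], intro allI impI)
  fix s assume s: "s < d"
  define Pj where "Pj = matvec d Sig (\<lambda>s. j s - q s) s"
  define Pi where "Pi = matvec d Sig (\<lambda>s. i s - q s) s"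
  define A where "A = perm_idx n d Sig q j s - perm_idx n d Sig q i s"
  have o: "offs n d Sig q i j s = cred n A" unfolding offs_def vred_def A_def using s by simp
  have pj: "perm_idx n d Sig q j s = cred n Pj" unfolding perm_idx_def vred_def Pj_def using s by simp
  have pi: "perm_idx n d Sig q i s = cred n Pi" unfolding perm_idx_def vred_def Pi_def using s by simp
  have mv: "matvec d Sig (\<lambda>s. j s - i s) s = Pj - Pi"
    unfolding Pj_def Pi_def using s by (simp add: matvec_diff algebra_simps)
  have "offs n d Sig q i j s - matvec d Sig (\<lambda>s. j s - i s) s
      = - (A - cred n A) - (Pj - cred n Pj) + (Pi - cred n Pi)"
    unfolding o mv A_def pj pi by simp
  moreover have "int n dvd - (A - cred n A) - (Pj - cred n Pj) + (Pi - cred n Pi)"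
    by (intro dvd_add dvd_diff dvd_minus_iff[THEN iffD2] cred_dvd)
  ultimately show "int n dvd (offs n d Sig q i j s - matvec d Sig (\<lambda>s. j s - i s) s)" by simp
qed

lemma mu2_alt:
  assumes n0: "n > 0" and b: "even b" "2 \<le> b"
  shows "mu2 n b F d Sig q x i = (\<Sum>j\<in>idx n d - {i}. (norm (x j))^2 * (Gfilt n b F d (matvec d Sig (\<lambda>s. j s - i s)))^2)"
  unfolding mu2_def Gfilt_offs[OF assms] by (simp add: norm_mult power_mult_distrib)

lemma mu2_nonneg: "0 \<le> mu2 n b F d Sig q x i"
  unfolding mu2_def by (intro sum_nonneg) auto

lemma idx_diff:
  assumes "i \<in> idx n d" "j \<in> idx n d" "j \<noteq> i" "even n"
  shows "\<exists>s<d. j s - i s \<noteq> 0" "\<forall>s<d. \<bar>j s - i s\<bar> < int n"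
proof -
  show "\<exists>s<d. j s - i s \<noteq> 0"
  proof (rule ccontr)
    assume "\<not> (\<exists>s<d. j s - i s \<noteq> 0)"
    then have h: "\<forall>s<d. j s = i s" by simp
    have "j = i"
    proof
      fix s show "j s = i s"
      proof (cases "s < d")
        case True then show ?thesis using h by simp
      next
        case False then show ?thesis using assms(1,2) unfolding idx_def by simp
      qed
    qed
    then show False using assms(3) by simp
  qed
  have "int n = 2 * (int n div 2)" using assms(4) by auto
  then show "\<forall>s<d. \<bar>j s - i s\<bar> < int n"
  proof (intro allI impI)
    fix s assume nn: "int n = 2 * (int n div 2)" and s: "s < d"
    have "- (int n div 2) \<le> j s" "j s < int n div 2" "- (int n div 2) \<le> i s" "i s < int n div 2"
      using assms(1,2) s unfolding idx_def by auto
    then show "\<bar>j s - i s\<bar> < int n" using nn by linarith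
  qed
qed

lemma idx_eq_if_dvd:
  assumes "j \<in> idx n d" "j' \<in> idx n d" "even n" "\<forall>s<d. int n dvd (j s - j' s)"
  shows "j = j'"
proof (rule ccontr)
  assume ne: "j \<noteq> j'"
  obtain s where s: "s < d" "j s - j' s \<noteq> 0" using idx_diff(1)[OF assms(2,1) ne assms(3)] by auto
  have lt: "\<bar>j s - j' s\<bar> < int n" using idx_diff(2)[OF assms(2,1) ne assms(3)] s by auto
  have "int n dvd \<bar>j s - j' s\<bar>" using assms(4) s by simp
  then have "int n \<le> \<bar>j s - j' s\<bar>" using s by (intro zdvd_imp_le) auto
  then show False using lt by simp
qed

lemma pow2_parameters:
  fixes n b :: nat
  assumes "n = 2 ^ k" "b = 2 ^ k'" "3 \<le> b" "b \<le> n"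
  shows "even n" "even b" "2 \<le> b" "n > 0"
proof -
  have "k' \<noteq> 0" "k' \<noteq> 1" using assms(2,3) by (auto intro!: Nat.gr0I)
  moreover have "k' \<le> k" using assms(1,2,4) power_le_imp_le_exp[of 2 k' k] by simp
  ultimately show "even n" "even b" "2 \<le> b" "n > 0" using assms(1,2,3) by auto
qed

(* Part (1): averaging \<mu>\<^sup>2(i) over \<Sigma> and q gives at most (320/b)^d \<parallel>x\<parallel>\<^sup>2, since \<mu>\<^sup>2(i) does not
   depend on q and each j \<noteq> i contributes |x_j|^2 times an average bounded by avg_filter_energy. *)
lemma mu2_average_bound:
  assumes n: "n = 2 ^ k" and b: "b = 2 ^ k'" "3 \<le> b" "b \<le> n" and d1: "1 \<le> d" and dF: "2 * d \<le> F"
    and i: "i \<in> idx n d"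
  shows "(\<Sum>Sig\<in>mats n d. \<Sum>q\<in>idx n d. mu2 n b F d Sig q x i)
                / (real (card (mats n d)) * real (card (idx n d)))
              \<le> 320 ^ d * sqnorm n d x / real (b ^ d)"
proof -
  note par = pow2_parameters[OF assms(1-4)]
  define A where "A = 320 ^ d / real b ^ d"
  define g where "g = (\<lambda>Sig j. (Gfilt n b F d (matvec d Sig (\<lambda>s. j s - i s)))^2)"
  have "mats n d \<noteq> {}" using mats_nonempty[of n d] b by auto
  then have pos: "0 < real (card (mats n d)) * real (card (idx n d))"
    using finite_mats card_idx[OF par(1)] par(4) by (simp add: card_gt_0_iff)
  have avg: "(\<Sum>Sig\<in>mats n d. g Sig j) \<le> real (card (mats n d)) * A" if j: "j \<in> idx n d - {i}" for j
    unfolding g_def A_def using idx_diff[OF i _ _ par(1), of j] j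
    by (intro avg_filter_energy[OF n par(2,3) d1 dF]) auto
  have "(\<Sum>Sig\<in>mats n d. \<Sum>q\<in>idx n d. mu2 n b F d Sig q x i)
      = real (card (idx n d)) * (\<Sum>j\<in>idx n d - {i}. (norm (x j))^2 * (\<Sum>Sig\<in>mats n d. g Sig j))"
    unfolding mu2_alt[OF par(4,2,3)] g_def
    by (simp add: sum_distrib_left sum_distrib_right sum.swap[of _ "mats n d"] mult.assoc mult.left_commute)
  also have "\<dots> \<le> real (card (idx n d)) * (\<Sum>j\<in>idx n d - {i}. (norm (x j))^2 * (real (card (mats n d)) * A))"
    using avg by (intro mult_left_mono sum_mono) auto
  also have "\<dots> = real (card (idx n d)) * real (card (mats n d)) * A * (\<Sum>j\<in>idx n d - {i}. (norm (x j))^2)"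
    by (simp add: sum_distrib_left mult_ac)
  also have "\<dots> \<le> real (card (idx n d)) * real (card (mats n d)) * A * sqnorm n d x"
    unfolding sqnorm_def A_def by (intro mult_left_mono sum_mono2 finite_idx) auto
  finally show ?thesis using pos unfolding A_def by (simp add: pos_divide_le_eq mult_ac)
qed

lemma dotp_comm: "dotp d a b = dotp d b a"
  unfolding dotp_def by (simp add: mult.commute)

lemma dotp_transp: "dotp d j (matvec d (mtransp Sig) w) = dotp d w (matvec d Sig j)"
proof -
  have "dotp d j (matvec d (mtransp Sig) w) = (\<Sum>s<d. \<Sum>t<d. j s * (Sig t s * w t))"
    unfolding dotp_def matvec_def mtransp_def by (simp add: sum_distrib_left)
  also have "\<dots> = (\<Sum>t<d. \<Sum>s<d. j s * (Sig t s * w t))" by (rule sum.swap)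
  also have "\<dots> = dotp d w (matvec d Sig j)"
    unfolding dotp_def matvec_def by (intro sum.cong refl) (simp add: sum_distrib_left mult_ac)
  finally show ?thesis .
qed

lemma dotp_vred_cong: "int n dvd (dotp d j (vred n d w) - dotp d j w)"
proof -
  have "dotp d j (vred n d w) - dotp d j w = (\<Sum>s<d. j s * (cred n (w s) - w s))"
    unfolding dotp_def vred_def by (simp add: sum_subtractf right_diff_distrib)
  moreover have "int n dvd (\<Sum>s<d. j s * (cred n (w s) - w s))"
  proof (intro dvd_sum dvd_mult)
    fix s show "int n dvd (cred n (w s) - w s)" using cred_dvd[of n "w s"] by (simp add: dvd_diff_commute)
  qed
  ultimately show ?thesis by simp
qed

lemma dotp_diff: "dotp d k (\<lambda>s. A s - B s) = dotp d k A - dotp d k B"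
  unfolding dotp_def by (simp add: sum_subtractf right_diff_distrib)

lemma dotp_add: "dotp d k (\<lambda>s. A s + B s) = dotp d k A + dotp d k B"
  unfolding dotp_def by (simp add: sum.distrib distrib_left)

lemma dotp_matvec_diff: "dotp d a (matvec d Sig (\<lambda>s. j s - i s)) = dotp d a (matvec d Sig j) - dotp d a (matvec d Sig i)"
  unfolding dotp_def by (simp add: matvec_diff sum_subtractf right_diff_distrib)

(* The phase identity: the characters contributed by the inverse DFT, by the DFT of x under the
   index map \<Sigma>^T(k - a) (reduced mod n), by the modulation with \<Sigma>q, and by the DFT of G combine
   into a character in a and a character in k. *)
lemma phase_identity:
  assumes n0: "n > 0"
  shows "omega_pow n (dotp d k p) * omega_pow n (- dotp d j (vred n d (matvec d (mtransp Sig) (\<lambda>s. k s - a s))))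
       * omega_pow n (dotp d k (matvec d Sig q)) * omega_pow n (- dotp d m k)
     = omega_pow n (dotp d a (matvec d Sig j)) *
       omega_pow n (dotp d k (\<lambda>s. p s - matvec d Sig j s + matvec d Sig q s - m s))"
proof -
  have e1: "omega_pow n (- dotp d j (vred n d (matvec d (mtransp Sig) (\<lambda>s. k s - a s))))
          = omega_pow n (- dotp d j (matvec d (mtransp Sig) (\<lambda>s. k s - a s)))"
  proof (rule omega_pow_cong[OF n0])
    have "int n dvd - (dotp d j (vred n d (matvec d (mtransp Sig) (\<lambda>s. k s - a s))) - dotp d j (matvec d (mtransp Sig) (\<lambda>s. k s - a s)))"
      using dotp_vred_cong by (simp only: dvd_minus_iff)
    then show "int n dvd (- dotp d j (vred n d (matvec d (mtransp Sig) (\<lambda>s. k s - a s))) - - dotp d j (matvec d (mtransp Sig) (\<lambda>s. k s - a s)))"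
      by simp
  qed
  have e2: "dotp d j (matvec d (mtransp Sig) (\<lambda>s. k s - a s)) = dotp d k (matvec d Sig j) - dotp d a (matvec d Sig j)"
    unfolding dotp_transp dotp_comm[of d "\<lambda>s. k s - a s"] dotp_diff dotp_comm[of d "matvec d Sig j"] ..
  have e3: "dotp d k (\<lambda>s. p s - matvec d Sig j s + matvec d Sig q s - m s)
      = dotp d k p - dotp d k (matvec d Sig j) + dotp d k (matvec d Sig q) - dotp d m k"
    by (simp add: dotp_diff[of d k "\<lambda>s. p s - matvec d Sig j s + matvec d Sig q s" m]
        dotp_add[of d k "\<lambda>s. p s - matvec d Sig j s" "matvec d Sig q"] dotp_diff[of d k p] dotp_comm[of d m k])
  have "omega_pow n (dotp d k p) * omega_pow n (- dotp d j (matvec d (mtransp Sig) (\<lambda>s. k s - a s)))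
       * omega_pow n (dotp d k (matvec d Sig q)) * omega_pow n (- dotp d m k)
     = omega_pow n (dotp d k p + - dotp d j (matvec d (mtransp Sig) (\<lambda>s. k s - a s))
        + dotp d k (matvec d Sig q) + - dotp d m k)"
    by (simp only: omega_pow_add)
  also have "dotp d k p + - dotp d j (matvec d (mtransp Sig) (\<lambda>s. k s - a s))
        + dotp d k (matvec d Sig q) + - dotp d m k
      = dotp d a (matvec d Sig j) + dotp d k (\<lambda>s. p s - matvec d Sig j s + matvec d Sig q s - m s)"
    unfolding e2 e3 by simp
  also have "omega_pow n \<dots> = omega_pow n (dotp d a (matvec d Sig j)) *
       omega_pow n (dotp d k (\<lambda>s. p s - matvec d Sig j s + matvec d Sig q s - m s))"
    by (rule omega_pow_add)
  finally show ?thesis unfolding e1 .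
qed

lemma sel_idx:
  assumes n0: "n > 0" and ne: "even n"
  shows "{m \<in> idx n d. \<forall>s<d. int n dvd (W s - m s)} = {vred n d W}"
proof (intro equalityI subsetI)
  fix m assume m: "m \<in> {m \<in> idx n d. \<forall>s<d. int n dvd (W s - m s)}"
  have "m = vred n d W"
  proof
    fix s show "m s = vred n d W s"
    proof (cases "s < d")
      case True
      then have "cred n (W s) = m s" using m unfolding idx_def by (intro cred_unique[OF n0 ne]) auto
      then show ?thesis using True unfolding vred_def by simp
    next
      case False then show ?thesis using m unfolding idx_def vred_def by simp
    qed
  qed
  then show "m \<in> {vred n d W}" by simp
next
  fix m assume "m \<in> {vred n d W}"
  then have m: "m = vred n d W" by simp
  have "m \<in> idx n d" unfolding m idx_def vred_def using cred_range[OF n0 ne] by auto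
  moreover have "\<forall>s<d. int n dvd (W s - m s)" unfolding m vred_def by (simp add: cred_dvd)
  ultimately show "m \<in> {m \<in> idx n d. \<forall>s<d. int n dvd (W s - m s)}" by simp
qed

lemma sum_sel:
  assumes n0: "n > 0" and ne: "even n"
  shows "(\<Sum>m\<in>idx n d. if (\<forall>s<d. int n dvd (W s - m s)) then f m else 0) = f (vred n d W)"
proof -
  have "(\<Sum>m\<in>idx n d. if (\<forall>s<d. int n dvd (W s - m s)) then f m else 0)
     = (\<Sum>m\<in>{m \<in> idx n d. \<forall>s<d. int n dvd (W s - m s)}. f m)"
    by (simp add: sum.inter_filter[OF finite_idx])
  also have "\<dots> = f (vred n d W)" unfolding sel_idx[OF assms] by simp
  finally show ?thesis .
qed

lemma spectral_product_entry:
  assumes n0: "n > 0"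
  shows "omega_pow n (dotp d k p) * (Pop n d Sig a q (dft n d x) k * Ghat n b F d k)
      = 1 / of_nat n ^ d * (\<Sum>j\<in>idx n d. \<Sum>m\<in>idx n d. x j * complex_of_real (Gfilt n b F d m)
          * omega_pow n (dotp d a (matvec d Sig j))
          * omega_pow n (dotp d k (\<lambda>s. p s - matvec d Sig j s + matvec d Sig q s - m s)))"
proof -
  define c where "c = 1 / complex_of_real (sqrt (real (n ^ d)))"
  define G' where "G' = (\<lambda>m. complex_of_real (Gfilt n b F d m))"
  define l where "l = vred n d (matvec d (mtransp Sig) (\<lambda>s. k s - a s))"
  have cc: "c * c = 1 / of_nat n ^ d"
    unfolding c_def using n0 by (simp flip: of_real_mult)
  have "omega_pow n (dotp d k p) * (Pop n d Sig a q (dft n d x) k * Ghat n b F d k)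
    = omega_pow n (dotp d k p) * ((c * (\<Sum>j\<in>idx n d. omega_pow n (- dotp d j l) * x j)) * omega_pow n (dotp d k (matvec d Sig q))
        * (c * (\<Sum>m\<in>idx n d. omega_pow n (- dotp d m k) * G' m)))"
    unfolding Pop_def Ghat_def dft_def c_def l_def G'_def by simp
  also have "\<dots> = c * c * (\<Sum>j\<in>idx n d. \<Sum>m\<in>idx n d. x j * G' m *
      (omega_pow n (dotp d k p) * omega_pow n (- dotp d j l) * omega_pow n (dotp d k (matvec d Sig q)) * omega_pow n (- dotp d m k)))"
    by (simp add: sum_product sum_distrib_left sum_distrib_right mult_ac)
  also have "\<dots> = c * c * (\<Sum>j\<in>idx n d. \<Sum>m\<in>idx n d. x j * G' m * omega_pow n (dotp d a (matvec d Sig j))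
      * omega_pow n (dotp d k (\<lambda>s. p s - matvec d Sig j s + matvec d Sig q s - m s)))"
    unfolding l_def phase_identity[OF n0] by (simp add: mult_ac)
  finally show ?thesis unfolding cc G'_def .
qed

(* Closed form of u: summing the spectral product over k collapses, by orthogonality, the sum
   over m to the single m \<equiv> p - \<Sigma>j + \<Sigma>q (mod n); so u is a filtered, modulated copy of x. *)
lemma uvec_formula:
  assumes n0: "n > 0" and ne: "even n" and b: "even b" "2 \<le> b"
  shows "uvec n b F d Sig a q x p = (\<Sum>j\<in>idx n d. x j * omega_pow n (dotp d a (matvec d Sig j))
      * complex_of_real (Gfilt n b F d (\<lambda>s. p s - matvec d Sig j s + matvec d Sig q s)))"
proof -
  define NN :: complex where "NN = of_nat n ^ d"
  define G' where "G' = (\<lambda>m. complex_of_real (Gfilt n b F d m))"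
  define e where "e = (\<lambda>j. x j * omega_pow n (dotp d a (matvec d Sig j)))"
  define W where "W = (\<lambda>j s. p s - matvec d Sig j s + matvec d Sig q s)"
  have NN0: "NN \<noteq> 0" unfolding NN_def using n0 by simp
  have "uvec n b F d Sig a q x p = (\<Sum>k\<in>idx n d. omega_pow n (dotp d k p) * (Pop n d Sig a q (dft n d x) k * Ghat n b F d k))"
    unfolding uvec_def idft_def using n0 by simp
  also have "\<dots> = 1 / NN * (\<Sum>j\<in>idx n d. \<Sum>m\<in>idx n d. e j * G' m * (\<Sum>k\<in>idx n d. omega_pow n (dotp d k (\<lambda>s. W j s - m s))))"
    unfolding spectral_product_entry[OF n0] NN_def e_def G'_def W_def sum_distrib_left[symmetric]
    by (subst sum.swap, rule arg_cong[where f = "\<lambda>x. _ * x"], rule sum.cong[OF refl], subst sum.swap)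
      (simp add: sum_distrib_left mult_ac)
  also have "\<dots> = (\<Sum>j\<in>idx n d. e j * (\<Sum>m\<in>idx n d. if \<forall>s<d. int n dvd (W j s - m s) then G' m else 0))"
    unfolding sum_omega_pow_dotp[OF n0 ne] NN_def[symmetric] using NN0
    by (simp add: sum_distrib_left if_distrib cong: if_cong)
  also have "\<dots> = (\<Sum>j\<in>idx n d. e j * G' (W j))"
  proof (intro sum.cong refl)
    fix j
    have "Gfilt n b F d (vred n d (W j)) = Gfilt n b F d (W j)"
      by (rule Gfilt_cong[OF n0 b]) (simp add: vred_def dvd_diff_commute cred_dvd)
    then show "e j * (\<Sum>m\<in>idx n d. if \<forall>s<d. int n dvd (W j s - m s) then G' m else 0) = e j * G' (W j)"
      unfolding sum_sel[OF n0 ne] G'_def by simp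
  qed
  finally show ?thesis unfolding e_def G'_def W_def .
qed

lemma sum_sq_char_sum:
  fixes c :: "(nat \<Rightarrow> int) \<Rightarrow> complex" and D :: "(nat \<Rightarrow> int) \<Rightarrow> nat \<Rightarrow> int"
  assumes n0: "n > 0" and ne: "even n" and finI: "finite I"
    and sep: "\<And>j j'. j \<in> I \<Longrightarrow> j' \<in> I \<Longrightarrow> \<forall>s<d. int n dvd (D j s - D j' s) \<Longrightarrow> j = j'"
  shows "(\<Sum>a\<in>idx n d. (norm (\<Sum>j\<in>I. c j * omega_pow n (dotp d a (D j))))^2)
       = real (n ^ d) * (\<Sum>j\<in>I. (norm (c j))^2)"
proof -
  define z where "z = (\<lambda>a. \<Sum>j\<in>I. c j * omega_pow n (dotp d a (D j)))"
  define NN :: complex where "NN = of_nat n ^ d"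
  have zz: "z a * cnj (z a) = (\<Sum>j\<in>I. \<Sum>j'\<in>I. c j * cnj (c j') * omega_pow n (dotp d a (\<lambda>s. D j s - D j' s)))" for a
  proof -
    have "z a * cnj (z a) = (\<Sum>j\<in>I. c j * omega_pow n (dotp d a (D j))) * (\<Sum>j'\<in>I. cnj (c j') * cnj (omega_pow n (dotp d a (D j'))))"
      unfolding z_def by (simp add: cnj_sum)
    also have "\<dots> = (\<Sum>j\<in>I. \<Sum>j'\<in>I. c j * cnj (c j') * (omega_pow n (dotp d a (D j)) * cnj (omega_pow n (dotp d a (D j')))))"
      by (simp add: sum_product mult_ac)
    also have "\<dots> = (\<Sum>j\<in>I. \<Sum>j'\<in>I. c j * cnj (c j') * omega_pow n (dotp d a (\<lambda>s. D j s - D j' s)))"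
      by (simp add: omega_pow_diff[symmetric] dotp_diff)
    finally show ?thesis .
  qed
  have "complex_of_real (\<Sum>a\<in>idx n d. (norm (z a))^2) = (\<Sum>a\<in>idx n d. z a * cnj (z a))"
    by (simp only: of_real_sum complex_norm_square)
  also have "\<dots> = (\<Sum>j\<in>I. \<Sum>j'\<in>I. c j * cnj (c j') * (\<Sum>a\<in>idx n d. omega_pow n (dotp d a (\<lambda>s. D j s - D j' s))))"
    unfolding zz by (subst sum.swap, rule sum.cong[OF refl], subst sum.swap) (simp add: sum_distrib_left)
  also have "\<dots> = (\<Sum>j\<in>I. \<Sum>j'\<in>I. c j * cnj (c j') * (if j = j' then NN else 0))"
    unfolding sum_omega_pow_dotp[OF n0 ne] NN_def using sep by (intro sum.cong refl) auto
  also have "\<dots> = (\<Sum>j\<in>I. c j * cnj (c j) * NN)"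
    using finI by (simp add: if_distrib cong: if_cong)
  also have "\<dots> = (\<Sum>j\<in>I. complex_of_real ((norm (c j))^2) * complex_of_real (real (n ^ d)))"
    unfolding NN_def complex_norm_square by simp
  also have "\<dots> = complex_of_real (real (n ^ d) * (\<Sum>j\<in>I. (norm (c j))^2))"
    by (simp add: sum_distrib_left mult.commute)
  finally show ?thesis unfolding z_def by (simp only: of_real_eq_iff)
qed

lemma phase_corrected_residual:
  assumes n0: "n > 0" and ne: "even n" and b: "even b" "2 \<le> b" and i: "i \<in> idx n d"
  shows "omega_pow n (- dotp d a (matvec d Sig i)) * uvec n b F d Sig a q x (perm_idx n d Sig q i) - x i
       = (\<Sum>j\<in>idx n d - {i}. (x j * complex_of_real (Gfilt n b F d (matvec d Sig (\<lambda>s. j s - i s))))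
            * omega_pow n (dotp d a (matvec d Sig (\<lambda>s. j s - i s))))"
proof -
  define p where "p = perm_idx n d Sig q i"
  define D where "D = (\<lambda>j. matvec d Sig (\<lambda>s. j s - i s))"
  define cc where "cc = (\<lambda>j. x j * complex_of_real (Gfilt n b F d (D j)))"
  have gW: "Gfilt n b F d (\<lambda>s. p s - matvec d Sig j s + matvec d Sig q s) = Gfilt n b F d (D j)" for j
  proof -
    have "Gfilt n b F d (\<lambda>s. p s - matvec d Sig j s + matvec d Sig q s) = Gfilt n b F d (\<lambda>s. - D j s)"
    proof (rule Gfilt_cong[OF n0 b], intro allI impI)
      fix s assume s: "s < d"
      have ps: "p s = cred n (matvec d Sig (\<lambda>s. i s - q s) s)" unfolding p_def perm_idx_def vred_def using s by simp
      have e: "p s - matvec d Sig j s + matvec d Sig q s - - D j s = p s - matvec d Sig (\<lambda>s. i s - q s) s"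
        unfolding D_def using s by (simp add: matvec_diff)
      have "int n dvd (p s - matvec d Sig (\<lambda>s. i s - q s) s)"
        unfolding ps using cred_dvd by (simp add: dvd_diff_commute)
      then show "int n dvd (p s - matvec d Sig j s + matvec d Sig q s - - D j s)" unfolding e .
    qed
    also have "\<dots> = Gfilt n b F d (D j)" by (rule Gfilt_neg[OF n0 ne])
    finally show ?thesis .
  qed
  have Di: "D i = (\<lambda>_. 0)" unfolding D_def matvec_def by auto
  have "omega_pow n (- dotp d a (matvec d Sig i)) * uvec n b F d Sig a q x p
      = (\<Sum>j\<in>idx n d. cc j * omega_pow n (dotp d a (D j)))"
    unfolding uvec_formula[OF n0 ne b] gW sum_distrib_left
  proof (intro sum.cong refl)
    fix j
    have "omega_pow n (- dotp d a (matvec d Sig i)) * omega_pow n (dotp d a (matvec d Sig j)) = omega_pow n (dotp d a (D j))"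
      unfolding D_def dotp_matvec_diff by (simp add: omega_pow_add[symmetric])
    then show "omega_pow n (- dotp d a (matvec d Sig i)) * (x j * omega_pow n (dotp d a (matvec d Sig j)) * complex_of_real (Gfilt n b F d (D j)))
        = cc j * omega_pow n (dotp d a (D j))"
      unfolding cc_def by (simp add: mult_ac)
  qed
  also have "\<dots> = cc i * omega_pow n (dotp d a (D i)) + (\<Sum>j\<in>idx n d - {i}. cc j * omega_pow n (dotp d a (D j)))"
    by (rule sum.remove[OF finite_idx i])
  also have "cc i * omega_pow n (dotp d a (D i)) = x i" unfolding cc_def Di by (simp add: dotp_def)
  finally show ?thesis unfolding p_def cc_def D_def by simp
qed

lemma residual_error_average:
  assumes n: "n = 2 ^ k" and ne: "even n" and b: "even b" "2 \<le> b"
    and Sig: "Sig \<in> mats n d" and i: "i \<in> idx n d"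
  shows "(\<Sum>a\<in>idx n d. (norm (omega_pow n (- dotp d a (matvec d Sig i))
                                  * uvec n b F d Sig a q x (perm_idx n d Sig q i) - x i))\<^sup>2)
                / real (card (idx n d))
         = mu2 n b F d Sig q x i"
proof -
  have n0: "n > 0" using n by simp
  have sep: "j = j'" if "j \<in> idx n d - {i}" "j' \<in> idx n d - {i}"
    and h: "\<forall>s<d. int n dvd (matvec d Sig (\<lambda>s. j s - i s) s - matvec d Sig (\<lambda>s. j' s - i s) s)" for j j'
  proof -
    have "\<forall>s<d. int n dvd matvec d Sig (\<lambda>s. j s - j' s) s" using h by (simp add: matvec_diff)
    then have "\<forall>s<d. int n dvd (j s - j' s)"
      using dvd_of_dvd_matvec[OF _ n] Sig unfolding mats_alt by blast
    then show "j = j'" using idx_eq_if_dvd[OF _ _ ne] that by auto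
  qed
  have "(\<Sum>a\<in>idx n d. (norm (omega_pow n (- dotp d a (matvec d Sig i))
                                  * uvec n b F d Sig a q x (perm_idx n d Sig q i) - x i))\<^sup>2)
      = real (n ^ d) * mu2 n b F d Sig q x i"
    unfolding phase_corrected_residual[OF n0 ne b i] mu2_alt[OF n0 b]
    by (subst sum_sq_char_sum[OF n0 ne _ sep]) (simp_all add: finite_idx norm_mult power_mult_distrib)
  then show ?thesis using card_idx[OF ne] n0 by simp
qed

lemma residual_error_bound:
  assumes n: "n = 2 ^ k" and b: "b = 2 ^ k'" "3 \<le> b" "b \<le> n"
    and Sig: "Sig \<in> mats n d" and i: "i \<in> idx n d"
  shows "(\<Sum>a\<in>idx n d. (norm (omega_pow n (- dotp d a (matvec d Sig i))
                                  * uvec n b F d Sig a q x (perm_idx n d Sig q i) - x i))\<^sup>2)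
                / real (card (idx n d))
         \<le> 2 * mu2 n b F d Sig q x i"
  using residual_error_average[OF n pow2_parameters(1,2,3)[OF assms(1-4)] Sig i] mu2_nonneg by simp

theorem mainTheorem4:
  shows "(\<exists>C :: real \<Rightarrow> real.
           (\<forall>K. \<exists>M. \<forall>r. 2 \<le> r \<and> r \<le> K \<longrightarrow> C r \<le> M) \<and>
           (\<forall>(n::nat) (b::nat) (d::nat) (F::nat) (x :: (nat \<Rightarrow> int) \<Rightarrow> complex) (i :: nat \<Rightarrow> int).
              (\<exists>k::nat. n = 2 ^ k) \<longrightarrow> (\<exists>k::nat. b = 2 ^ k) \<longrightarrow> 3 \<le> b \<longrightarrow> b \<le> n \<longrightarrow>
              1 \<le> d \<longrightarrow> 2 * d \<le> F \<longrightarrow> i \<in> idx n d \<longrightarrow>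
              (\<Sum>Sig\<in>mats n d. \<Sum>q\<in>idx n d. mu2 n b F d Sig q x i)
                / (real (card (mats n d)) * real (card (idx n d)))
              \<le> C (real F / real d) ^ d * sqnorm n d x / real (b ^ d)))
       \<and>
         (\<forall>(n::nat) (b::nat) (d::nat) (F::nat) (x :: (nat \<Rightarrow> int) \<Rightarrow> complex)
             (Sig :: nat \<Rightarrow> nat \<Rightarrow> int) (q :: nat \<Rightarrow> int) (i :: nat \<Rightarrow> int).
              (\<exists>k::nat. n = 2 ^ k) \<longrightarrow> (\<exists>k::nat. b = 2 ^ k) \<longrightarrow> 3 \<le> b \<longrightarrow> b \<le> n \<longrightarrow>
              1 \<le> d \<longrightarrow> 2 * d \<le> F \<longrightarrow> Sig \<in> mats n d \<longrightarrow> q \<in> idx n d \<longrightarrow> i \<in> idx n d \<longrightarrow>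
              (\<Sum>a\<in>idx n d. (norm (omega_pow n (- dotp d a (matvec d Sig i))
                                  * uvec n b F d Sig a q x (perm_idx n d Sig q i) - x i))\<^sup>2)
                / real (card (idx n d))
              \<le> 2 * mu2 n b F d Sig q x i)"
proof (intro conjI exI[of _ "\<lambda>_. 320"] allI impI)
  show "\<exists>M. \<forall>r. 2 \<le> r \<and> r \<le> K \<longrightarrow> (\<lambda>_. 320::real) r \<le> M" for K by auto
qed (elim exE, (rule mu2_average_bound residual_error_bound; assumption))+

end
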